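(* Every cactus is in $B_1^m$.
   Context: A cactus is a connected graph in which any two simple cycles have at most one vertex in common. An EPG representation of a graph is a set of paths on a rectangular grid (sequences of grid points joined consecutively by grid edges), one per vertex, such that two vertices are adjacent iff their paths share a grid edge. A bend is a point of a path where a horizontal and a vertical grid edge of the path meet; a path is monotonic if it is ascending in both columns and rows. $B_1^m$ is the class of graphs having an EPG representation in which every path is monotonic and has at most one bend. *)

theory Defs
  imports Main
begin

definition simple_graph :: "'a set \<Rightarrow> ('a \<Rightarrow> 'a \<Rightarrow> bool) \<Rightarrow> bool" where
  "simple_graph V E \<longleftrightarrow> finite V \<and> (\<forall>u v. E u v \<longrightarrow> E v u)
     \<and> (\<forall>v. \<not> E v v) \<and> (\<forall>u v. E u v \<longrightarrow> u \<in> V \<and> v \<in> V)"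

definition connected_graph :: "'a set \<Rightarrow> ('a \<Rightarrow> 'a \<Rightarrow> bool) \<Rightarrow> bool" where
  "connected_graph V E \<longleftrightarrow> simple_graph V E \<and> V \<noteq> {}
     \<and> (\<forall>u\<in>V. \<forall>v\<in>V. E\<^sup>*\<^sup>* u v)"

definition simple_cycle :: "'a set \<Rightarrow> ('a \<Rightarrow> 'a \<Rightarrow> bool) \<Rightarrow> 'a list \<Rightarrow> bool" where
  "simple_cycle V E cs \<longleftrightarrow> length cs \<ge> 3 \<and> distinct cs \<and> set cs \<subseteq> V
     \<and> (\<forall>i < length cs. E (cs ! i) (cs ! ((i + 1) mod length cs)))"

definition cycle_edges :: "'a list \<Rightarrow> 'a set set" where
  "cycle_edges cs = {{cs ! i, cs ! ((i + 1) mod length cs)} | i. i < length cs}"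

text \<open>Two simple cycles are the same cycle iff they have the same edge set.
A cactus: connected graph in which any two distinct simple cycles share at most one vertex.\<close>
definition cactus :: "'a set \<Rightarrow> ('a \<Rightarrow> 'a \<Rightarrow> bool) \<Rightarrow> bool" where
  "cactus V E \<longleftrightarrow> connected_graph V E
     \<and> (\<forall>c1 c2. simple_cycle V E c1 \<and> simple_cycle V E c2 \<and> cycle_edges c1 \<noteq> cycle_edges c2
          \<longrightarrow> card (set c1 \<inter> set c2) \<le> 1)"

type_synonym gpoint = "int \<times> int"

text \<open>Grid points are (column, row); grid edges join points at distance 1
horizontally or vertically.\<close>
definition grid_adj :: "gpoint \<Rightarrow> gpoint \<Rightarrow> bool" where
  "grid_adj p q \<longleftrightarrow> (snd p = snd q \<and> \<bar>fst p - fst q\<bar> = 1) \<or> (fst p = fst q \<and> \<bar>snd p - snd q\<bar> = 1)"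

definition grid_path :: "gpoint list \<Rightarrow> bool" where
  "grid_path ps \<longleftrightarrow> length ps \<ge> 2 \<and> (\<forall>i. i + 1 < length ps \<longrightarrow> grid_adj (ps ! i) (ps ! (i + 1)))"

definition path_edges :: "gpoint list \<Rightarrow> gpoint set set" where
  "path_edges ps = {{ps ! i, ps ! (i + 1)} | i. i + 1 < length ps}"

definition horizontal :: "gpoint \<Rightarrow> gpoint \<Rightarrow> bool" where
  "horizontal p q \<longleftrightarrow> snd p = snd q"

definition vertical :: "gpoint \<Rightarrow> gpoint \<Rightarrow> bool" where
  "vertical p q \<longleftrightarrow> fst p = fst q"

definition is_bend :: "gpoint list \<Rightarrow> nat \<Rightarrow> bool" where
  "is_bend ps i \<longleftrightarrow> 0 < i \<and> i + 1 < length ps \<and>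
     ((horizontal (ps ! (i - 1)) (ps ! i) \<and> vertical (ps ! i) (ps ! (i + 1)))
      \<or> (vertical (ps ! (i - 1)) (ps ! i) \<and> horizontal (ps ! i) (ps ! (i + 1))))"

definition num_bends :: "gpoint list \<Rightarrow> nat" where
  "num_bends ps = card {i. is_bend ps i}"

definition monotonic :: "gpoint list \<Rightarrow> bool" where
  "monotonic ps \<longleftrightarrow> (\<forall>i j. i \<le> j \<and> j < length ps \<longrightarrow>
       fst (ps ! i) \<le> fst (ps ! j) \<and> snd (ps ! i) \<le> snd (ps ! j))"

definition EPG_rep :: "'a set \<Rightarrow> ('a \<Rightarrow> 'a \<Rightarrow> bool) \<Rightarrow> ('a \<Rightarrow> gpoint list) \<Rightarrow> bool" where
  "EPG_rep V E P \<longleftrightarrow> (\<forall>v\<in>V. grid_path (P v))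
     \<and> (\<forall>u\<in>V. \<forall>v\<in>V. u \<noteq> v \<longrightarrow> (E u v \<longleftrightarrow> path_edges (P u) \<inter> path_edges (P v) \<noteq> {}))"

definition in_B1m :: "'a set \<Rightarrow> ('a \<Rightarrow> 'a \<Rightarrow> bool) \<Rightarrow> bool" where
  "in_B1m V E \<longleftrightarrow> (\<exists>P. EPG_rep V E P \<and> (\<forall>v\<in>V. monotonic (P v) \<and> num_bends (P v) \<le> 1))"

end

(*
  Every vertex is drawn as a monotonic L-shaped grid path: a horizontal segment followed by a
  vertical one, or vice versa.  The proof is an induction over cut vertices with a stronger
  invariant: for every vertex r there is a representation in which each path owns a private grid
  edge and r is a horizontal segment covering every edge that other paths have on its row.

  A cactus without cut vertices is a cycle, a single edge or a single vertex; these are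
  represented by explicit L-shapes.  At a cut vertex c a cactus splits into two smaller cacti, one
  containing r and one rooted at c.  Scaling the representation of the first by a large factor
  turns the private edge of c into a long segment whose grid cell no other path enters.  A
  translated copy of the representation of the second is put into that cell with its root on the
  row of the segment, and the copy of c is dropped: by the root property the long segment meets
  exactly the paths the copy met.  If the private edge of c is vertical, the same is done after
  reflecting the picture in the diagonal.
*)

theory Submission
  imports Defs "HOL-Library.Transitive_Closure_Table"
begin

section \<open>Cacti\<close>

definition induced :: "('a \<Rightarrow> 'a \<Rightarrow> bool) \<Rightarrow> 'a set \<Rightarrow> 'a \<Rightarrow> 'a \<Rightarrow> bool" where
  "induced E S u v \<longleftrightarrow> E u v \<and> u \<in> S \<and> v \<in> S"

lemma cactus_graph:
  assumes "cactus V E"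
  shows cactus_finite: "finite V" and cactus_nonempty: "V \<noteq> {}"
    and cactus_sym: "E u v \<Longrightarrow> E v u" and cactus_symp: "symp E" and cactus_irrefl: "\<not> E v v"
    and cactus_edge_mem: "E u v \<Longrightarrow> u \<in> V \<and> v \<in> V"
    and cactus_connected: "u \<in> V \<Longrightarrow> v \<in> V \<Longrightarrow> E\<^sup>*\<^sup>* u v"
  using assms unfolding cactus_def connected_graph_def simple_graph_def by (blast intro: sympI)+

lemma rtranclp_exit:
  assumes "R\<^sup>*\<^sup>* a b" "a \<in> S" "b \<notin> S"
  obtains p q where "R p q" "p \<in> S" "q \<notin> S"
  using assms by (induction rule: rtranclp_induct) auto

lemma rtranclp_induced_mem: "(induced E S)\<^sup>*\<^sup>* u v \<Longrightarrow> u \<in> S \<Longrightarrow> v \<in> S"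
  by (induction rule: rtranclp_induct) (auto simp: induced_def)

lemma rtranclp_induced_mono:
  "(induced E S)\<^sup>*\<^sup>* u v \<Longrightarrow> S \<subseteq> T \<Longrightarrow> (induced E T)\<^sup>*\<^sup>* u v"
  by (erule rtranclp_mono[THEN predicate2D, rotated]) (auto simp: induced_def)

lemma rtranclp_induced_sym:
  assumes "symp E" and "(induced E S)\<^sup>*\<^sup>* u v"
  shows "(induced E S)\<^sup>*\<^sup>* v u"
  using assms(2)
proof (induction rule: rtranclp_induct)
  case (step y z)
  then have "induced E S z y" using \<open>symp E\<close> unfolding induced_def by (blast dest: sympD)
  then show ?case using step.IH by (rule converse_rtranclp_into_rtranclp)
qed simp

lemma cactus_induced:
  assumes cactus: "cactus V E" and S: "S \<subseteq> V" "S \<noteq> {}"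
    and connected: "\<And>u v. u \<in> S \<Longrightarrow> v \<in> S \<Longrightarrow> (induced E S)\<^sup>*\<^sup>* u v"
  shows "cactus S (induced E S)"
proof -
  have "simple_graph S (induced E S)"
    using cactus S finite_subset unfolding cactus_def connected_graph_def simple_graph_def induced_def
    by blast
  moreover have "simple_cycle V E cs" if "simple_cycle S (induced E S) cs" for cs
    using that S unfolding simple_cycle_def induced_def by auto
  ultimately show ?thesis
    using cactus S connected unfolding cactus_def connected_graph_def by blast
qed

lemma simple_path_in_induced:
  assumes "(induced E S)\<^sup>*\<^sup>* a b" "a \<noteq> b"
  obtains xs where "rtrancl_path E a xs b" "distinct (a # xs)" "set (a # xs) \<subseteq> S" "xs \<noteq> []"
proof -
  obtain ys where "rtrancl_path (induced E S) a ys b"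
    using assms(1) rtranclp_eq_rtrancl_path by metis
  then obtain xs where path: "rtrancl_path (induced E S) a xs b" and "distinct (a # xs)"
    by (rule rtrancl_path_distinct)
  moreover have "xs \<noteq> []" using path assms(2) by (auto elim: rtrancl_path.cases)
  moreover have "a \<in> S"
    using path \<open>xs \<noteq> []\<close> by (auto elim: rtrancl_path.cases simp: induced_def)
  moreover have "set xs \<subseteq> S"
    using rtrancl_path_Range[OF path] by (auto simp: induced_def Rangep.simps)
  moreover have "rtrancl_path E a xs b"
    using path by (rule rtrancl_path_mono) (simp add: induced_def)
  ultimately show thesis using that by simp
qed

lemma simple_cycle_close_path:
  assumes path: "rtrancl_path E a xs b" and "distinct (a # xs)" "xs \<noteq> []"
    and "v \<notin> set (a # xs)" "E v a" "E b v" "set (a # xs) \<subseteq> V" "v \<in> V"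
  shows "simple_cycle V E (v # a # xs)"
  unfolding simple_cycle_def
proof (intro conjI allI impI)
  show "3 \<le> length (v # a # xs)" "distinct (v # a # xs)" "set (v # a # xs) \<subseteq> V"
    using assms by (auto simp: Suc_le_eq)
next
  fix i let ?C = "v # a # xs"
  assume i: "i < length ?C"
  consider "i = 0" | j where "i = Suc j" "j < length xs" | "i = Suc (length xs)"
    using i by (cases i) (force simp: less_Suc_eq)+
  then show "E (?C ! i) (?C ! ((i + 1) mod length ?C))"
  proof cases
    case 1
    then show ?thesis using \<open>E v a\<close> by simp
  next
    case (2 j)
    then show ?thesis using rtrancl_path_nth[OF path, of j] by simp
  next
    case 3
    have "?C ! i = b" using rtrancl_path_last[OF path \<open>xs \<noteq> []\<close>] \<open>xs \<noteq> []\<close> 3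
      by (simp add: last_conv_nth)
    then show ?thesis using \<open>E b v\<close> 3 by simp
  qed
qed

lemma cycle_edge_at_head:
  assumes "{v, z} \<in> cycle_edges (v # ys)" "v \<notin> set ys" "ys \<noteq> []"
  shows "z = hd ys \<or> z = last ys"
proof -
  let ?C = "v # ys"
  obtain i where i: "i < length ?C" and e: "{v, z} = {?C ! i, ?C ! ((i + 1) mod length ?C)}"
    using assms(1) unfolding cycle_edges_def by blast
  have at_v: "k = 0" if "k < length ?C" "?C ! k = v" for k
    using that assms(2) by (cases k) auto
  have "(i + 1) mod length ?C < length ?C" by simp
  then consider "i = 0" | "(i + 1) mod length ?C = 0"
    using e at_v i by (metis doubleton_eq_iff)
  then show ?thesis
  proof cases
    case 1
    then show ?thesis using e assms(3) by (cases ys) (auto simp: doubleton_eq_iff)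
  next
    case 2
    then have "i = length ys" using i by (auto simp: mod_Suc split: if_splits)
    then show ?thesis using e 2 assms(3) by (auto simp: doubleton_eq_iff last_conv_nth)
  qed
qed

definition cut_vertex :: "'a set \<Rightarrow> ('a \<Rightarrow> 'a \<Rightarrow> bool) \<Rightarrow> 'a \<Rightarrow> bool" where
  "cut_vertex V E c \<longleftrightarrow> c \<in> V \<and> (\<exists>x\<in>V - {c}. \<exists>y\<in>V - {c}. \<not> (induced E (V - {c}))\<^sup>*\<^sup>* x y)"

lemma non_cut_vertex_connected:
  "\<not> cut_vertex V E c \<Longrightarrow> c \<in> V \<Longrightarrow> x \<in> V - {c} \<Longrightarrow> y \<in> V - {c} \<Longrightarrow>
    (induced E (V - {c}))\<^sup>*\<^sup>* x y"
  unfolding cut_vertex_def by blast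

lemma neighbours_of_non_cut_vertex:
  assumes cactus: "cactus V E" and v: "v \<in> V" "\<not> cut_vertex V E v"
    and nbrs: "E v a" "E v b" "E v c" "a \<noteq> b"
  shows "c = a \<or> c = b"
proof (rule ccontr)
  assume "\<not> (c = a \<or> c = b)"
  then have distinct: "a \<noteq> b" "c \<noteq> a" "c \<noteq> b" using nbrs by auto
  have in_V: "a \<in> V - {v}" "b \<in> V - {v}" "c \<in> V - {v}"
    using nbrs cactus_edge_mem[OF cactus] cactus_irrefl[OF cactus] by blast+
  note connected = non_cut_vertex_connected[OF v(2,1)]
  obtain P where P: "rtrancl_path E a P b" "distinct (a # P)" "set (a # P) \<subseteq> V - {v}" "P \<noteq> []"
    using simple_path_in_induced[OF connected[OF in_V(1,2)] distinct(1)] .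
  obtain W where W: "rtrancl_path E c W a" "distinct (c # W)" "set (c # W) \<subseteq> V - {v}" "W \<noteq> []"
    using simple_path_in_induced[OF connected[OF in_V(3,1)] distinct(2)] .
  have cycle1: "simple_cycle V E (v # a # P)"
    using P nbrs(1) cactus_sym[OF cactus nbrs(2)] v(1) by (intro simple_cycle_close_path) auto
  have cycle2: "simple_cycle V E (v # c # W)"
    using W nbrs(3) cactus_sym[OF cactus nbrs(1)] v(1) by (intro simple_cycle_close_path) auto
  have "{v, c} \<in> cycle_edges (v # c # W)" unfolding cycle_edges_def by force
  moreover have "{v, c} \<notin> cycle_edges (v # a # P)"
  proof
    assume "{v, c} \<in> cycle_edges (v # a # P)"
    moreover have "v \<notin> set (a # P)" using P(3) by blast
    ultimately have "c = a \<or> c = last (a # P)" using cycle_edge_at_head[of v c "a # P"] by simp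
    then show False using distinct rtrancl_path_last[OF P(1,4)] P(4) by auto
  qed
  ultimately have "card (set (v # a # P) \<inter> set (v # c # W)) \<le> 1"
    using cactus cycle1 cycle2 unfolding cactus_def by blast
  moreover have "{v, a} \<subseteq> set (v # a # P) \<inter> set (v # c # W)"
    using rtrancl_path_last[OF W(1,4)] W(4) by auto
  then have "2 \<le> card (set (v # a # P) \<inter> set (v # c # W))"
    using in_V(1) card_mono[OF _ \<open>{v, a} \<subseteq> _\<close>] by auto
  ultimately show False by simp
qed

text \<open>For \<open>n \<le> 2\<close> this describes a single vertex or a single edge; note that
  \<^term>\<open>cyclic_adj 1 0 0\<close> holds, so only distinct indices are meaningful.\<close>

definition cyclic_adj :: "nat \<Rightarrow> nat \<Rightarrow> nat \<Rightarrow> bool" where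
  "cyclic_adj n i j \<longleftrightarrow> j = Suc i mod n \<or> i = Suc j mod n"

lemma cyclic_adj_iff:
  "i < n \<Longrightarrow> j < n \<Longrightarrow>
    cyclic_adj n i j \<longleftrightarrow> j = i + 1 \<or> i = j + 1 \<or> (i = 0 \<and> j + 1 = n) \<or> (j = 0 \<and> i + 1 = n)"
  unfolding cyclic_adj_def by (auto simp: mod_Suc)

lemma cycle_pred_index:
  assumes "i < n"
  shows "(i + (n - 1)) mod n < n" and "Suc ((i + (n - 1)) mod n) mod n = i"
    and "3 \<le> n \<Longrightarrow> (i + (n - 1)) mod n \<noteq> Suc i mod n"
proof -
  show "(i + (n - 1)) mod n < n" using assms by simp
  have "Suc ((i + (n - 1)) mod n) mod n = (i + n) mod n"
    using assms by (simp add: mod_Suc_eq)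
  then show "Suc ((i + (n - 1)) mod n) mod n = i" using assms by simp
  show "(i + (n - 1)) mod n \<noteq> Suc i mod n" if "3 \<le> n"
  proof (cases "i = 0")
    case True
    then show ?thesis using that by (simp add: mod_Suc)
  next
    case False
    then have "(i + (n - 1)) mod n = i - 1" using assms by (simp add: mod_if)
    then show ?thesis using assms that False by (auto simp: mod_Suc)
  qed
qed

lemma simple_cycle_of_cactus_without_cut_vertex:
  assumes cactus: "cactus V E" and no_cut: "\<And>c. \<not> cut_vertex V E c"
    and cycle: "simple_cycle V E C"
  shows "set C = V"
    and "\<And>i j. i < length C \<Longrightarrow> j < length C \<Longrightarrow> E (C ! i) (C ! j) \<longleftrightarrow> cyclic_adj (length C) i j"
proof -
  define n where "n = length C"
  have n: "3 \<le> n" "distinct C" "set C \<subseteq> V" and step: "\<And>i. i < n \<Longrightarrow> E (C ! i) (C ! (Suc i mod n))"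
    using cycle unfolding simple_cycle_def n_def by auto
  have succ: "Suc i mod n < n" for i using n(1) by simp
  have neighbours: "q = C ! (Suc i mod n) \<or> q = C ! ((i + (n - 1)) mod n)"
    if i: "i < n" and q: "E (C ! i) q" for i q
  proof (rule neighbours_of_non_cut_vertex[OF cactus _ no_cut step[OF i] _ q])
    show "C ! i \<in> V" using i n unfolding n_def by auto
    show "E (C ! i) (C ! ((i + (n - 1)) mod n))"
      using step[OF cycle_pred_index(1)[OF i]] cactus_sym[OF cactus]
      unfolding cycle_pred_index(2)[OF i] by blast
    show "C ! (Suc i mod n) \<noteq> C ! ((i + (n - 1)) mod n)"
      using n i succ cycle_pred_index[OF i] unfolding n_def by (simp add: nth_eq_iff_index_eq)
  qed
  show "set C = V"
  proof (rule ccontr)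
    assume "set C \<noteq> V"
    then obtain z where z: "z \<in> V" "z \<notin> set C" using n(3) by blast
    have C0: "C ! 0 \<in> set C" using n(1) unfolding n_def by (intro nth_mem) linarith
    then have "E\<^sup>*\<^sup>* (C ! 0) z" using cactus_connected[OF cactus] z(1) n(3) by blast
    from rtranclp_exit[OF this C0 z(2)]
    obtain p q where pq: "E p q" "p \<in> set C" "q \<notin> set C" .
    then obtain i where i: "i < n" "C ! i = p" by (auto simp: in_set_conv_nth n_def)
    then have "q = C ! (Suc i mod n) \<or> q = C ! ((i + (n - 1)) mod n)" using neighbours pq(1) by blast
    moreover have "C ! (Suc i mod n) \<in> set C" "C ! ((i + (n - 1)) mod n) \<in> set C"
      using succ cycle_pred_index(1)[OF i(1)] unfolding n_def by (simp_all only: nth_mem)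
    ultimately show False using pq(3) by blast
  qed
  fix i j assume ij: "i < length C" "j < length C"
  show "E (C ! i) (C ! j) \<longleftrightarrow> cyclic_adj (length C) i j"
  proof
    assume "E (C ! i) (C ! j)"
    then have "C ! j = C ! (Suc i mod n) \<or> C ! j = C ! ((i + (n - 1)) mod n)"
      using neighbours ij unfolding n_def by blast
    then have "j = Suc i mod n \<or> j = (i + (n - 1)) mod n"
      using n(2) ij succ cycle_pred_index(1)[of i n] unfolding n_def by (auto simp: nth_eq_iff_index_eq)
    then show "cyclic_adj (length C) i j"
      using cycle_pred_index(2)[of i n] ij unfolding cyclic_adj_def n_def by auto
  next
    assume "cyclic_adj (length C) i j"
    then show "E (C ! i) (C ! j)"
      using step ij cactus_sym[OF cactus] unfolding cyclic_adj_def n_def by auto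
  qed
qed

lemma simple_cycle_through_vertex:
  assumes cactus: "cactus V E" and no_cut: "\<And>c. \<not> cut_vertex V E c"
    and three: "3 \<le> card V" and r: "r \<in> V"
  obtains C where "simple_cycle V E C" "C ! 0 = r"
proof -
  have fin: "finite V" by (rule cactus_finite[OF cactus])
  have other: "\<exists>z\<in>V. z \<notin> S" if "finite S" "card S < 3" for S
  proof (rule ccontr)
    assume "\<not> (\<exists>z\<in>V. z \<notin> S)"
    then have "card V \<le> card S" using that(1) by (intro card_mono) auto
    then show False using three that(2) by simp
  qed
  obtain w where w: "w \<in> V" "w \<notin> {r}" using other[of "{r}"] by auto
  have "r \<in> {r}" by simp
  from rtranclp_exit[OF cactus_connected[OF cactus r w(1)] this w(2)]
  obtain p a where pa: "E p a" "p \<in> {r}" "a \<notin> {r}" .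
  then have a: "E r a" "a \<in> V - {r}" using cactus_edge_mem[OF cactus pa(1)] by simp_all
  have "card {r, a} < 3" using a(2) by (auto simp: card_insert_if)
  then obtain z where z: "z \<in> V" "z \<notin> {r, a}" using other[of "{r, a}"] by blast
  have "(induced E (V - {a}))\<^sup>*\<^sup>* r z"
    using non_cut_vertex_connected[OF no_cut] a r z by blast
  from rtranclp_exit[OF this \<open>r \<in> {r}\<close>] z(2)
  obtain p b where "induced E (V - {a}) p b" "p \<in> {r}" "b \<notin> {r}" by blast
  then have b: "E r b" "b \<in> V - {r}" "a \<noteq> b" unfolding induced_def by auto
  obtain xs where xs: "rtrancl_path E a xs b" "distinct (a # xs)" "set (a # xs) \<subseteq> V - {r}" "xs \<noteq> []"
    using simple_path_in_induced[OF non_cut_vertex_connected[OF no_cut r a(2) b(2)] b(3)] .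
  have "simple_cycle V E (r # a # xs)"
    using xs a(1) cactus_sym[OF cactus b(1)] r by (intro simple_cycle_close_path) auto
  then show thesis using that by simp
qed

lemma cactus_without_cut_vertex_is_cycle:
  assumes cactus: "cactus V E" and no_cut: "\<And>c. \<not> cut_vertex V E c" and r: "r \<in> V"
  obtains C where "distinct C" "set C = V" "C ! 0 = r"
    "\<And>i j. i < length C \<Longrightarrow> j < length C \<Longrightarrow> i \<noteq> j \<Longrightarrow> E (C ! i) (C ! j) \<longleftrightarrow> cyclic_adj (length C) i j"
proof -
  have fin: "finite V" by (rule cactus_finite[OF cactus])
  consider "V = {r}" | w where "V = {r, w}" "w \<noteq> r" | "3 \<le> card V"
  proof (cases "3 \<le> card V")
    case False
    then have "card (V - {r}) \<le> 1" using fin r by simp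
    then consider "V - {r} = {}" | w where "V - {r} = {w}"
      using fin by (metis card_0_eq card_1_singletonE finite_Diff le_Suc_eq One_nat_def le_zero_eq)
    then show thesis using that r by cases blast+
  qed
  then show thesis
  proof cases
    case 1
    then show thesis by (intro that[of "[r]"]) auto
  next
    case (2 w)
    have "E\<^sup>*\<^sup>* r w" "r \<in> {r}" "w \<notin> {r}" using cactus_connected[OF cactus, of r w] 2 by auto
    from rtranclp_exit[OF this]
    obtain p q where "E p q" "p \<in> {r}" "q \<notin> {r}" .
    then have "E r w" using cactus_edge_mem[OF cactus] 2 by auto
    then have "E ([r, w] ! i) ([r, w] ! j) \<longleftrightarrow> cyclic_adj (length [r, w]) i j"
      if "i < length [r, w]" "j < length [r, w]" "i \<noteq> j" for i j
      using that cactus_sym[OF cactus] by (auto simp: cyclic_adj_def less_Suc_eq)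
    then show thesis using 2 by (intro that[of "[r, w]"]) auto
  next
    case 3
    obtain C where C: "simple_cycle V E C" "C ! 0 = r" by (rule simple_cycle_through_vertex[OF cactus no_cut 3 r])
    then show thesis
      using that simple_cycle_of_cactus_without_cut_vertex[OF cactus no_cut C(1)]
      unfolding simple_cycle_def by blast
  qed
qed

lemma reaches_cut_vertex_within:
  assumes cactus: "cactus V E" and c: "c \<in> V" "c \<in> S" and u: "u \<in> V - {c}"
    and component: "\<And>z. (induced E (V - {c}))\<^sup>*\<^sup>* u z \<Longrightarrow> z \<in> S"
  shows "(induced E S)\<^sup>*\<^sup>* u c"
proof -
  let ?R = "induced E (V - {c})"
  define K where "K = {z. ?R\<^sup>*\<^sup>* u z}"
  have K_sub: "K \<subseteq> V - {c}" using rtranclp_induced_mem[of E "V - {c}" u] u unfolding K_def by blast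
  have path_in_K: "(induced E S)\<^sup>*\<^sup>* u z" if "?R\<^sup>*\<^sup>* u z" for z
    using that
  proof (induction rule: rtranclp_induct)
    case (step y z)
    then have "induced E S y z"
      using component unfolding induced_def by (auto intro: rtranclp.rtrancl_into_rtrancl)
    with step.IH show ?case by (rule rtranclp.rtrancl_into_rtrancl)
  qed simp
  have "u \<in> K" "c \<notin> K" using K_sub unfolding K_def by auto
  from rtranclp_exit[OF cactus_connected[OF cactus _ c(1)] this] u
  obtain p q where pq: "E p q" "p \<in> K" "q \<notin> K" by blast
  have "q = c"
  proof (rule ccontr)
    assume "q \<noteq> c"
    then have "?R p q" using pq K_sub cactus_edge_mem[OF cactus pq(1)] unfolding induced_def by blast
    then have "q \<in> K" using pq(2) unfolding K_def by (auto intro: rtranclp.rtrancl_into_rtrancl)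
    then show False using pq(3) by blast
  qed
  have "(induced E S)\<^sup>*\<^sup>* u p" using path_in_K pq(2) unfolding K_def by blast
  moreover have "induced E S p c" using pq \<open>q = c\<close> component c(2) unfolding induced_def K_def by blast
  ultimately show ?thesis by (rule rtranclp.rtrancl_into_rtrancl)
qed

lemma cactus_induced_star:
  assumes cactus: "cactus V E" and S: "S \<subseteq> V" "c \<in> S"
    and reach: "\<And>u. u \<in> S \<Longrightarrow> (induced E S)\<^sup>*\<^sup>* u c"
  shows "cactus S (induced E S)"
proof (rule cactus_induced[OF cactus S(1)])
  show "S \<noteq> {}" using S(2) by blast
  fix u v assume "u \<in> S" "v \<in> S"
  have "(induced E S)\<^sup>*\<^sup>* c v"
    using reach[OF \<open>v \<in> S\<close>] by (rule rtranclp_induced_sym[OF cactus_symp[OF cactus]])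
  with reach[OF \<open>u \<in> S\<close>] show "(induced E S)\<^sup>*\<^sup>* u v" by (rule rtranclp_trans)
qed

lemma cactus_split_at_cut_vertex:
  assumes cactus: "cactus V E" and cut: "cut_vertex V E c"
  obtains V1 V2 where "V = V1 \<union> V2" "V1 \<inter> V2 = {c}" "V1 \<subset> V" "V2 \<subset> V"
    "cactus V1 (induced E V1)" "cactus V2 (induced E V2)"
    "\<And>u w. u \<in> V1 - {c} \<Longrightarrow> w \<in> V2 - {c} \<Longrightarrow> \<not> E u w \<and> \<not> E w u"
proof -
  let ?R = "induced E (V - {c})"
  obtain x y where c: "c \<in> V" and xy: "x \<in> V - {c}" "y \<in> V - {c}" "\<not> ?R\<^sup>*\<^sup>* x y"
    using cut unfolding cut_vertex_def by blast
  define K where "K = {z. ?R\<^sup>*\<^sup>* x z}"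
  define V1 where "V1 = insert c K"
  define V2 where "V2 = V - K"
  have K_sub: "K \<subseteq> V - {c}" using rtranclp_induced_mem[of E "V - {c}" x] xy(1) unfolding K_def by blast
  have "x \<in> K" "y \<notin> K" using xy unfolding K_def by auto
  then have split: "V = V1 \<union> V2" "V1 \<inter> V2 = {c}" "V1 \<subset> V" "V2 \<subset> V"
    using K_sub c xy unfolding V1_def V2_def by auto
  have "cactus V1 (induced E V1)"
  proof (rule cactus_induced_star[OF cactus])
    fix u assume "u \<in> V1"
    then consider "u = c" | "u \<in> K" "u \<in> V - {c}" using K_sub unfolding V1_def by blast
    then show "(induced E V1)\<^sup>*\<^sup>* u c"
    proof cases
      case 2
      have "z \<in> V1" if "?R\<^sup>*\<^sup>* u z" for z
        using 2(1) that unfolding V1_def K_def by (auto intro: rtranclp_trans)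
      then show ?thesis using 2(2) c by (intro reaches_cut_vertex_within[OF cactus]) (auto simp: V1_def)
    qed simp
  qed (use split in \<open>auto simp: V1_def\<close>)
  moreover have "cactus V2 (induced E V2)"
  proof (rule cactus_induced_star[OF cactus])
    fix u assume "u \<in> V2"
    then consider "u = c" | "u \<notin> K" "u \<in> V - {c}" unfolding V2_def by blast
    then show "(induced E V2)\<^sup>*\<^sup>* u c"
    proof cases
      case 2
      have "z \<in> V2" if "?R\<^sup>*\<^sup>* u z" for z
        using 2 that rtranclp_induced_mem[OF that] rtranclp_induced_sym[OF cactus_symp[OF cactus] that]
        unfolding V2_def K_def by (auto intro: rtranclp_trans)
      then show ?thesis using 2 c split(2) by (intro reaches_cut_vertex_within[OF cactus]) auto
    qed simp
  qed (use split c K_sub in \<open>auto simp: V2_def\<close>)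
  moreover have "\<not> E u w \<and> \<not> E w u" if "u \<in> V1 - {c}" "w \<in> V2 - {c}" for u w
  proof -
    have u: "u \<in> K" "u \<in> V - {c}" and w: "w \<in> V - {c}" "w \<notin> K"
      using that K_sub unfolding V1_def V2_def by auto
    have "\<not> E u w"
    proof
      assume "E u w"
      then have "?R u w" using u(2) w(1) unfolding induced_def by blast
      then have "w \<in> K" using u(1) unfolding K_def by (auto intro: rtranclp.rtrancl_into_rtrancl)
      then show False using w(2) by blast
    qed
    then show ?thesis using cactus_sym[OF cactus] by blast
  qed
  ultimately show thesis using that split by blast
qed

section \<open>Monotonic L-shaped grid paths\<close>

datatype grid_edge = HEdge int int | VEdge int int

fun edge_points :: "grid_edge \<Rightarrow> gpoint set" where
  "edge_points (HEdge x y) = {(x, y), (x + 1, y)}"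
| "edge_points (VEdge x y) = {(x, y), (x, y + 1)}"

lemma inj_edge_points: "inj edge_points"
proof (rule injI)
  fix e e' assume "edge_points e = edge_points e'"
  then show "e = e'"
    by (cases e; cases e') (auto simp: doubleton_eq_iff)
qed

fun swap_edge :: "grid_edge \<Rightarrow> grid_edge" where
  "swap_edge (HEdge x y) = VEdge y x"
| "swap_edge (VEdge x y) = HEdge y x"

lemma swap_edge_swap_edge [simp]: "swap_edge (swap_edge e) = e"
  by (cases e) auto

lemma swap_edge_image_iff: "e \<in> swap_edge ` S \<longleftrightarrow> swap_edge e \<in> S"
  by (metis image_iff swap_edge_swap_edge)

lemma swap_edge_points: "prod.swap ` edge_points e = edge_points (swap_edge e)"
  by (cases e) auto

text \<open>\<^term>\<open>RightUp x y a b\<close> starts at \<open>(x, y)\<close>, goes \<open>a\<close> steps right and then \<open>b\<close> steps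
  up; \<^term>\<open>UpRight x y a b\<close> goes \<open>a\<close> steps up and then \<open>b\<close> steps right.\<close>

datatype lshape = RightUp int int nat nat | UpRight int int nat nat

fun lshape_edges :: "lshape \<Rightarrow> grid_edge set" where
  "lshape_edges (RightUp x y a b) =
     {HEdge i y | i. x \<le> i \<and> i < x + int a} \<union> {VEdge (x + int a) j | j. y \<le> j \<and> j < y + int b}"
| "lshape_edges (UpRight x y a b) =
     {VEdge x j | j. y \<le> j \<and> j < y + int a} \<union> {HEdge i (y + int a) | i. x \<le> i \<and> i < x + int b}"

fun lshape_path :: "lshape \<Rightarrow> gpoint list" where
  "lshape_path (RightUp x y a b) = map (\<lambda>i. (x + int (min i a), y + int (i - a))) [0..<a + b + 1]"
| "lshape_path (UpRight x y a b) = map (\<lambda>i. (x + int (i - a), y + int (min i a))) [0..<a + b + 1]"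

fun swap_lshape :: "lshape \<Rightarrow> lshape" where
  "swap_lshape (RightUp x y a b) = UpRight y x a b"
| "swap_lshape (UpRight x y a b) = RightUp y x a b"

lemma lshape_path_swap: "lshape_path (swap_lshape s) = map prod.swap (lshape_path s)"
  by (cases s) auto

lemma lshape_edges_swap: "lshape_edges (swap_lshape s) = swap_edge ` lshape_edges s"
proof -
  have "e \<in> lshape_edges (swap_lshape s) \<longleftrightarrow> swap_edge e \<in> lshape_edges s" for e
    by (cases s; cases e) auto
  then show ?thesis by (simp add: set_eq_iff swap_edge_image_iff)
qed

lemma length_path_RightUp [simp]: "length (lshape_path (RightUp x y a b)) = a + b + 1"
  by simp

lemma nth_path_RightUp [simp]:
  "i < a + b + 1 \<Longrightarrow> lshape_path (RightUp x y a b) ! i = (x + int (min i a), y + int (i - a))"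
  by (simp del: upt_Suc)

declare lshape_path.simps [simp del]

lemma grid_path_RightUp:
  assumes "0 < a + b" shows "grid_path (lshape_path (RightUp x y a b))"
proof -
  have "grid_adj (x + int (min i a), y + int (i - a)) (x + int (min (i + 1) a), y + int (i + 1 - a))"
    for i by (cases "i < a") (auto simp: grid_adj_def)
  then show ?thesis
    using assms unfolding grid_path_def by auto
qed

lemma monotonic_RightUp: "monotonic (lshape_path (RightUp x y a b))"
  unfolding monotonic_def by (auto intro: diff_le_mono)

lemma bend_RightUp: "is_bend (lshape_path (RightUp x y a b)) i \<Longrightarrow> i = a"
  unfolding is_bend_def horizontal_def vertical_def
  by (cases "i < a"; cases "a < i") auto

lemma num_bends_RightUp: "num_bends (lshape_path (RightUp x y a b)) \<le> 1"
proof -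
  have "{i. is_bend (lshape_path (RightUp x y a b)) i} \<subseteq> {a}"
    using bend_RightUp by blast
  then show ?thesis
    unfolding num_bends_def using card_mono[of "{a}"] by fastforce
qed

lemma path_edges_RightUp:
  "path_edges (lshape_path (RightUp x y a b)) = edge_points ` lshape_edges (RightUp x y a b)"
  (is "?P = ?E")
proof
  show "?P \<subseteq> ?E"
  proof
    fix e assume "e \<in> ?P"
    then obtain i where i: "i < a + b" and e: "e = {(x + int (min i a), y + int (i - a)),
        (x + int (min (i + 1) a), y + int (i + 1 - a))}"
      unfolding path_edges_def by auto
    show "e \<in> ?E"
    proof (cases "i < a")
      case True
      have "e = edge_points (HEdge (x + int i) y)" using True e by auto
      moreover have "HEdge (x + int i) y \<in> lshape_edges (RightUp x y a b)" using True by simp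
      ultimately show ?thesis by blast
    next
      case False
      have "e = edge_points (VEdge (x + int a) (y + int (i - a)))"
        using False e by (auto simp: Suc_diff_le)
      moreover have "VEdge (x + int a) (y + int (i - a)) \<in> lshape_edges (RightUp x y a b)"
        using False i by simp
      ultimately show ?thesis by blast
    qed
  qed
next
  show "?E \<subseteq> ?P"
  proof
    fix e assume "e \<in> ?E"
    then consider i where "x \<le> i" "i < x + int a" "e = edge_points (HEdge i y)"
      | j where "y \<le> j" "j < y + int b" "e = edge_points (VEdge (x + int a) j)"
      by auto
    then obtain k where k: "k < a + b" and e: "e = {(x + int (min k a), y + int (k - a)),
        (x + int (min (k + 1) a), y + int (k + 1 - a))}"
    proof cases
      case 1
      then show ?thesis by (intro that[of "nat (i - x)"]) auto
    next
      case 2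
      then show ?thesis by (intro that[of "a + nat (j - y)"]) (auto simp: Suc_diff_le)
    qed
    have "e = {lshape_path (RightUp x y a b) ! k, lshape_path (RightUp x y a b) ! (k + 1)}"
      using k unfolding e by simp
    moreover have "k + 1 < length (lshape_path (RightUp x y a b))" using k by simp
    ultimately show "e \<in> ?P"
      unfolding path_edges_def by blast
  qed
qed

lemma grid_path_map_swap: "grid_path ps \<Longrightarrow> grid_path (map prod.swap ps)"
  unfolding grid_path_def grid_adj_def by auto

lemma monotonic_map_swap: "monotonic ps \<Longrightarrow> monotonic (map prod.swap ps)"
  unfolding monotonic_def by auto

lemma num_bends_map_swap: "num_bends (map prod.swap ps) = num_bends ps"
proof -
  have "is_bend (map prod.swap ps) i = is_bend ps i" for i
    unfolding is_bend_def horizontal_def vertical_def by auto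
  then show ?thesis unfolding num_bends_def by presburger
qed

lemma path_edges_map_swap: "path_edges (map prod.swap ps) = image prod.swap ` path_edges ps"
proof -
  have "path_edges ps = (\<lambda>i. {ps ! i, ps ! (i + 1)}) ` {i. i + 1 < length ps}" for ps :: "gpoint list"
    unfolding path_edges_def by auto
  then show ?thesis by (simp add: image_image)
qed

lemma lshape_cases_swap:
  obtains x y a b where "s = RightUp x y a b" | x y a b where "s = swap_lshape (RightUp x y a b)"
  by (cases s) auto

lemma grid_path_lshape_path:
  assumes "lshape_edges s \<noteq> {}" shows "grid_path (lshape_path s)"
proof -
  have RightUp: "grid_path (lshape_path (RightUp x y a b))" if "lshape_edges (RightUp x y a b) \<noteq> {}"
    for x y a b
    using that by (auto intro: grid_path_RightUp)
  show ?thesis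
  proof (cases s rule: lshape_cases_swap)
    case (1 x y a b)
    then show ?thesis using assms RightUp by blast
  next
    case (2 x y a b)
    then have "lshape_edges (RightUp x y a b) \<noteq> {}" using assms lshape_edges_swap by auto
    then show ?thesis unfolding 2 lshape_path_swap by (intro grid_path_map_swap RightUp)
  qed
qed

lemma monotonic_lshape_path: "monotonic (lshape_path s)"
  by (cases s rule: lshape_cases_swap)
    (simp_all only: lshape_path_swap monotonic_map_swap monotonic_RightUp)

lemma num_bends_lshape_path: "num_bends (lshape_path s) \<le> 1"
  by (cases s rule: lshape_cases_swap)
    (simp_all only: lshape_path_swap num_bends_map_swap num_bends_RightUp)

lemma path_edges_lshape_path: "path_edges (lshape_path s) = edge_points ` lshape_edges s"
  by (cases s rule: lshape_cases_swap)
    (simp_all only: lshape_path_swap lshape_edges_swap path_edges_map_swap path_edges_RightUp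
      image_image swap_edge_points)

lemma HEdge_same_row: "HEdge x y \<in> lshape_edges s \<Longrightarrow> HEdge x' y' \<in> lshape_edges s \<Longrightarrow> y = y'"
  by (cases s) auto

fun hseg :: "lshape \<Rightarrow> int \<times> int \<times> int" where
  "hseg (RightUp x y a b) = (y, x, x + int a)"
| "hseg (UpRight x y a b) = (y + int a, x, x + int b)"

fun vseg :: "lshape \<Rightarrow> int \<times> int \<times> int" where
  "vseg (RightUp x y a b) = (x + int a, y, y + int b)"
| "vseg (UpRight x y a b) = (x, y, y + int a)"

fun segments_overlap :: "int \<times> int \<times> int \<Rightarrow> int \<times> int \<times> int \<Rightarrow> bool" where
  "segments_overlap (l, a, b) (l', a', b') \<longleftrightarrow> l = l' \<and> max a a' < min b b'"

lemma HEdge_in_lshape_iff: "hseg s = (l, a, b) \<Longrightarrow> HEdge x y \<in> lshape_edges s \<longleftrightarrow> y = l \<and> a \<le> x \<and> x < b"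
  by (cases s) auto

lemma VEdge_in_lshape_iff: "vseg s = (l, a, b) \<Longrightarrow> VEdge x y \<in> lshape_edges s \<longleftrightarrow> x = l \<and> a \<le> y \<and> y < b"
  by (cases s) auto

lemma ex_common_point_iff: "(\<exists>x::int. a \<le> x \<and> x < b \<and> a' \<le> x \<and> x < b') \<longleftrightarrow> max a a' < min b b'"
proof
  assume "max a a' < min b b'"
  then show "\<exists>x. a \<le> x \<and> x < b \<and> a' \<le> x \<and> x < b'" by (intro exI[of _ "max a a'"]) simp
qed auto

lemma lshape_edges_meet_iff:
  "lshape_edges s \<inter> lshape_edges t \<noteq> {} \<longleftrightarrow>
    segments_overlap (hseg s) (hseg t) \<or> segments_overlap (vseg s) (vseg t)"
proof -
  obtain l a b l' a' b' where h: "hseg s = (l, a, b)" "hseg t = (l', a', b')" by (metis prod_cases3)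
  obtain m c d m' c' d' where v: "vseg s = (m, c, d)" "vseg t = (m', c', d')" by (metis prod_cases3)
  have "lshape_edges s \<inter> lshape_edges t \<noteq> {} \<longleftrightarrow>
      (\<exists>x y. HEdge x y \<in> lshape_edges s \<and> HEdge x y \<in> lshape_edges t) \<or>
      (\<exists>x y. VEdge x y \<in> lshape_edges s \<and> VEdge x y \<in> lshape_edges t)"
    by (metis disjoint_iff grid_edge.exhaust)
  also have "\<dots> \<longleftrightarrow> (l = l' \<and> (\<exists>x. a \<le> x \<and> x < b \<and> a' \<le> x \<and> x < b')) \<or>
      (m = m' \<and> (\<exists>y. c \<le> y \<and> y < d \<and> c' \<le> y \<and> y < d'))"
    unfolding HEdge_in_lshape_iff[OF h(1)] HEdge_in_lshape_iff[OF h(2)]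
      VEdge_in_lshape_iff[OF v(1)] VEdge_in_lshape_iff[OF v(2)] by auto
  finally show ?thesis unfolding h v ex_common_point_iff by simp
qed

lemma int_le_div_iff:
  fixes n :: int assumes "0 < n" shows "a \<le> x div n \<longleftrightarrow> n * a \<le> x"
proof
  assume "n * a \<le> x"
  then show "a \<le> x div n" using zdiv_mono1[OF _ assms] assms by fastforce
next
  assume "a \<le> x div n"
  then have "n * a \<le> n * (x div n)" using assms by simp
  also have "\<dots> \<le> x" using pos_mod_sign[OF assms, of x] by (simp add: minus_mod_eq_mult_div[symmetric])
  finally show "n * a \<le> x" .
qed

lemma int_div_less_iff: "0 < (n::int) \<Longrightarrow> x div n < b \<longleftrightarrow> x < n * b"
  using int_le_div_iff[of n b x] by linarith

fun scale_lshape :: "nat \<Rightarrow> lshape \<Rightarrow> lshape" where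
  "scale_lshape k (RightUp x y a b) = RightUp (int k * x) (int k * y) (k * a) (k * b)"
| "scale_lshape k (UpRight x y a b) = UpRight (int k * x) (int k * y) (k * a) (k * b)"

fun scale_edge :: "nat \<Rightarrow> grid_edge \<Rightarrow> grid_edge" where
  "scale_edge k (HEdge x y) = HEdge (int k * x) (int k * y)"
| "scale_edge k (VEdge x y) = VEdge (int k * x) (int k * y)"

fun unscale_edge :: "nat \<Rightarrow> grid_edge \<Rightarrow> grid_edge" where
  "unscale_edge k (HEdge x y) = HEdge (x div int k) (y div int k)"
| "unscale_edge k (VEdge x y) = VEdge (x div int k) (y div int k)"

lemma scaled_coordinate_iff:
  assumes "0 < k"
  shows "y = int k * r \<longleftrightarrow> int k dvd y \<and> y div int k = r"
    and "int k * lo \<le> x \<and> x < int k * hi \<longleftrightarrow> lo \<le> x div int k \<and> x div int k < hi"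
  using assms int_le_div_iff[of "int k"] int_div_less_iff[of "int k"] by auto

lemma HEdge_in_scale_lshape:
  assumes "0 < k"
  shows "HEdge x y \<in> lshape_edges (scale_lshape k s) \<longleftrightarrow>
    int k dvd y \<and> HEdge (x div int k) (y div int k) \<in> lshape_edges s"
proof (cases s)
  case (RightUp x0 y0 a b)
  have "HEdge x y \<in> lshape_edges (scale_lshape k s) \<longleftrightarrow>
      y = int k * y0 \<and> (int k * x0 \<le> x \<and> x < int k * (x0 + int a))"
    unfolding RightUp by (auto simp: algebra_simps)
  then show ?thesis unfolding RightUp scaled_coordinate_iff[OF assms] by auto
next
  case (UpRight x0 y0 a b)
  have "HEdge x y \<in> lshape_edges (scale_lshape k s) \<longleftrightarrow>
      y = int k * (y0 + int a) \<and> (int k * x0 \<le> x \<and> x < int k * (x0 + int b))"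
    unfolding UpRight by (auto simp: algebra_simps)
  then show ?thesis unfolding UpRight scaled_coordinate_iff[OF assms] by auto
qed

lemma VEdge_in_scale_lshape:
  assumes "0 < k"
  shows "VEdge x y \<in> lshape_edges (scale_lshape k s) \<longleftrightarrow>
    int k dvd x \<and> VEdge (x div int k) (y div int k) \<in> lshape_edges s"
proof (cases s)
  case (RightUp x0 y0 a b)
  have "VEdge x y \<in> lshape_edges (scale_lshape k s) \<longleftrightarrow>
      x = int k * (x0 + int a) \<and> (int k * y0 \<le> y \<and> y < int k * (y0 + int b))"
    unfolding RightUp by (auto simp: algebra_simps)
  then show ?thesis unfolding RightUp scaled_coordinate_iff[OF assms] by auto
next
  case (UpRight x0 y0 a b)
  have "VEdge x y \<in> lshape_edges (scale_lshape k s) \<longleftrightarrow>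
      x = int k * x0 \<and> (int k * y0 \<le> y \<and> y < int k * (y0 + int a))"
    unfolding UpRight by (auto simp: algebra_simps)
  then show ?thesis unfolding UpRight scaled_coordinate_iff[OF assms] by auto
qed

lemma scale_edge_in_scale_lshape_iff:
  "0 < k \<Longrightarrow> scale_edge k e \<in> lshape_edges (scale_lshape k s) \<longleftrightarrow> e \<in> lshape_edges s"
  by (cases e) (simp_all add: HEdge_in_scale_lshape VEdge_in_scale_lshape)

lemma unscale_edge_in_lshape:
  "0 < k \<Longrightarrow> e \<in> lshape_edges (scale_lshape k s) \<Longrightarrow> unscale_edge k e \<in> lshape_edges s"
  by (cases e) (simp_all add: HEdge_in_scale_lshape VEdge_in_scale_lshape)

lemma scale_lshape_edges_meet_iff:
  assumes "0 < k"
  shows "lshape_edges (scale_lshape k s) \<inter> lshape_edges (scale_lshape k t) \<noteq> {} \<longleftrightarrow>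
    lshape_edges s \<inter> lshape_edges t \<noteq> {}"
  using unscale_edge_in_lshape[OF assms] scale_edge_in_scale_lshape_iff[OF assms] by blast

fun shift_edge :: "int \<Rightarrow> int \<Rightarrow> grid_edge \<Rightarrow> grid_edge" where
  "shift_edge dx dy (HEdge x y) = HEdge (x + dx) (y + dy)"
| "shift_edge dx dy (VEdge x y) = VEdge (x + dx) (y + dy)"

fun shift_lshape :: "int \<Rightarrow> int \<Rightarrow> lshape \<Rightarrow> lshape" where
  "shift_lshape dx dy (RightUp x y a b) = RightUp (x + dx) (y + dy) a b"
| "shift_lshape dx dy (UpRight x y a b) = UpRight (x + dx) (y + dy) a b"

lemma inj_shift_edge: "inj (shift_edge dx dy)"
proof (rule injI)
  fix e e' show "shift_edge dx dy e = shift_edge dx dy e' \<Longrightarrow> e = e'"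
    by (cases e; cases e') auto
qed

lemma shift_edge_in_shift_lshape_iff:
  "shift_edge dx dy e \<in> lshape_edges (shift_lshape dx dy s) \<longleftrightarrow> e \<in> lshape_edges s"
  by (cases s; cases e) auto

lemma in_shift_lshapeE:
  assumes "e \<in> lshape_edges (shift_lshape dx dy s)"
  obtains e' where "e = shift_edge dx dy e'" "e' \<in> lshape_edges s"
proof -
  have "e = shift_edge dx dy (shift_edge (- dx) (- dy) e)" by (cases e) auto
  with assms shift_edge_in_shift_lshape_iff that show thesis by metis
qed

fun lshape_size :: "lshape \<Rightarrow> int" where
  "lshape_size (RightUp x y a b) = \<bar>x\<bar> + \<bar>y\<bar> + int a + int b"
| "lshape_size (UpRight x y a b) = \<bar>x\<bar> + \<bar>y\<bar> + int a + int b"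

lemma edge_points_le_lshape_size:
  "e \<in> lshape_edges s \<Longrightarrow> edge_points e \<subseteq> {- lshape_size s..lshape_size s} \<times> {- lshape_size s..lshape_size s}"
  by (cases s; cases e) auto

section \<open>Representations by L-shaped paths\<close>

definition lshape_rep :: "'a set \<Rightarrow> ('a \<Rightarrow> 'a \<Rightarrow> bool) \<Rightarrow> ('a \<Rightarrow> lshape) \<Rightarrow> bool" where
  "lshape_rep V E Q \<longleftrightarrow>
     (\<forall>u\<in>V. \<forall>v\<in>V. u \<noteq> v \<longrightarrow> (E u v \<longleftrightarrow> lshape_edges (Q u) \<inter> lshape_edges (Q v) \<noteq> {}))"

definition private_edges :: "'a set \<Rightarrow> ('a \<Rightarrow> lshape) \<Rightarrow> bool" where
  "private_edges V Q \<longleftrightarrow> (\<forall>v\<in>V. \<exists>e\<in>lshape_edges (Q v). \<forall>w\<in>V - {v}. e \<notin> lshape_edges (Q w))"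

text \<open>A horizontal root covers all edges that other paths have on its row, so it can be replaced by
  a longer segment of that row without changing which paths it meets.\<close>

definition horizontal_root :: "'a set \<Rightarrow> ('a \<Rightarrow> lshape) \<Rightarrow> 'a \<Rightarrow> bool" where
  "horizontal_root V Q r \<longleftrightarrow> (\<forall>x y. VEdge x y \<notin> lshape_edges (Q r)) \<and>
     (\<forall>v\<in>V - {r}. \<forall>x x' y. HEdge x y \<in> lshape_edges (Q v) \<longrightarrow> HEdge x' y \<in> lshape_edges (Q r)
        \<longrightarrow> HEdge x y \<in> lshape_edges (Q r))"

definition vertical_root :: "'a set \<Rightarrow> ('a \<Rightarrow> lshape) \<Rightarrow> 'a \<Rightarrow> bool" where
  "vertical_root V Q r \<longleftrightarrow> (\<forall>x y. HEdge x y \<notin> lshape_edges (Q r)) \<and>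
     (\<forall>v\<in>V - {r}. \<forall>x y y'. VEdge x y \<in> lshape_edges (Q v) \<longrightarrow> VEdge x y' \<in> lshape_edges (Q r)
        \<longrightarrow> VEdge x y \<in> lshape_edges (Q r))"

definition rooted_rep :: "'a set \<Rightarrow> ('a \<Rightarrow> 'a \<Rightarrow> bool) \<Rightarrow> 'a \<Rightarrow> bool" where
  "rooted_rep V E r \<longleftrightarrow> (\<exists>Q. lshape_rep V E Q \<and> private_edges V Q \<and> horizontal_root V Q r)"

lemma in_B1m_if_lshape_rep:
  assumes rep: "lshape_rep V E Q" and priv: "private_edges V Q"
  shows "in_B1m V E"
proof -
  have nonempty: "lshape_edges (Q v) \<noteq> {}" if "v \<in> V" for v
    using priv that unfolding private_edges_def by blast
  have "path_edges (lshape_path (Q u)) \<inter> path_edges (lshape_path (Q v)) =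
      edge_points ` (lshape_edges (Q u) \<inter> lshape_edges (Q v))" for u v
    unfolding path_edges_lshape_path by (simp add: image_Int[OF inj_edge_points])
  then have "EPG_rep V E (lshape_path \<circ> Q)"
    using rep nonempty grid_path_lshape_path unfolding EPG_rep_def lshape_rep_def by auto
  then show ?thesis
    unfolding in_B1m_def using monotonic_lshape_path num_bends_lshape_path by auto
qed

lemma lshape_rep_induced_iff: "lshape_rep V (induced E V) Q \<longleftrightarrow> lshape_rep V E Q"
  unfolding lshape_rep_def induced_def by auto

lemma rooted_rep_induced_iff: "rooted_rep V (induced E V) r \<longleftrightarrow> rooted_rep V E r"
  unfolding rooted_rep_def lshape_rep_induced_iff ..

lemma swap_edge_in_swap_lshape_iff:
  "swap_edge e \<in> lshape_edges (swap_lshape s) \<longleftrightarrow> e \<in> lshape_edges s"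
  unfolding lshape_edges_swap by (simp add: swap_edge_image_iff)

lemma lshape_rep_swap: "lshape_rep V E (swap_lshape \<circ> Q) \<longleftrightarrow> lshape_rep V E Q"
proof -
  have "lshape_edges (swap_lshape s) \<inter> lshape_edges (swap_lshape t) = swap_edge ` (lshape_edges s \<inter> lshape_edges t)"
    for s t
    unfolding lshape_edges_swap by (rule image_Int[symmetric]) (metis injI swap_edge_swap_edge)
  then show ?thesis unfolding lshape_rep_def by simp
qed

lemma private_edges_swap: "private_edges V (swap_lshape \<circ> Q) \<longleftrightarrow> private_edges V Q"
  unfolding private_edges_def lshape_edges_swap comp_def
  by (metis (no_types, lifting) image_eqI swap_edge_image_iff swap_edge_swap_edge)

lemma horizontal_root_swap: "horizontal_root V (swap_lshape \<circ> Q) r \<longleftrightarrow> vertical_root V Q r"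
  unfolding horizontal_root_def vertical_root_def comp_def
  by (metis swap_edge.simps swap_edge_in_swap_lshape_iff)

lemma vertical_root_swap: "vertical_root V (swap_lshape \<circ> Q) r \<longleftrightarrow> horizontal_root V Q r"
  unfolding horizontal_root_def vertical_root_def comp_def
  by (metis swap_edge.simps swap_edge_in_swap_lshape_iff)

lemma rooted_rep_bij_betw:
  assumes bij: "bij_betw g W V" and r: "r \<in> W"
    and iso: "\<And>i j. i \<in> W \<Longrightarrow> j \<in> W \<Longrightarrow> i \<noteq> j \<Longrightarrow> F i j \<longleftrightarrow> E (g i) (g j)"
    and "rooted_rep W F r"
  shows "rooted_rep V E (g r)"
proof -
  obtain Q where Q: "lshape_rep W F Q" "private_edges W Q" "horizontal_root W Q r"
    using assms(4) unfolding rooted_rep_def by blast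
  define h where "h = inv_into W g"
  have h: "h v \<in> W" "g (h v) = v" if "v \<in> V" for v
    using bij that unfolding h_def by (auto simp: bij_betw_def inv_into_into f_inv_into_f)
  have h_inj: "h u \<noteq> h v" if "u \<in> V" "v \<in> V" "u \<noteq> v" for u v
    using h(2) that by metis
  have hr: "h (g r) = r" and gr: "g r \<in> V"
    using bij r unfolding h_def by (auto simp: bij_betw_def)
  have "lshape_rep V E (Q \<circ> h)"
    unfolding lshape_rep_def
  proof (intro ballI impI)
    fix u v assume uv: "u \<in> V" "v \<in> V" "u \<noteq> v"
    have "E u v \<longleftrightarrow> F (h u) (h v)" using iso[OF h(1) h(1) h_inj] h(2) uv by simp
    then show "E u v \<longleftrightarrow> lshape_edges ((Q \<circ> h) u) \<inter> lshape_edges ((Q \<circ> h) v) \<noteq> {}"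
      using Q(1) h(1) h_inj uv unfolding lshape_rep_def by simp
  qed
  moreover have "private_edges V (Q \<circ> h)"
    unfolding private_edges_def
  proof
    fix v assume v: "v \<in> V"
    then obtain e where "e \<in> lshape_edges (Q (h v))" "\<forall>i\<in>W - {h v}. e \<notin> lshape_edges (Q i)"
      using Q(2) h(1) unfolding private_edges_def by blast
    then show "\<exists>e\<in>lshape_edges ((Q \<circ> h) v). \<forall>w\<in>V - {v}. e \<notin> lshape_edges ((Q \<circ> h) w)"
      using h(1) h_inj v by (intro bexI[of _ e]) auto
  qed
  moreover have "horizontal_root V (Q \<circ> h) (g r)"
    using Q(3) h(1) h_inj[OF _ gr] unfolding horizontal_root_def comp_def hr by blast
  ultimately show ?thesis unfolding rooted_rep_def by blast
qed

section \<open>Gluing two representations at a cut vertex\<close>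

text \<open>The representation \<open>Q2\<close> lies in the cell of the grid scaled by \<open>k\<close> that contains the
  scaled copy of the private edge \<open>HEdge X Y\<close> of \<open>c\<close>: its horizontal edges lie strictly inside
  the columns of the cell and within distance \<open>k\<close> of row \<open>k * Y\<close>, its vertical edges strictly
  between the columns \<open>k * X\<close> and \<open>k * (X + 1)\<close>.\<close>

locale lshape_gluing =
  fixes V1 V2 :: "'a set" and c :: 'a and E :: "'a \<Rightarrow> 'a \<Rightarrow> bool"
    and Q1 Q2 :: "'a \<Rightarrow> lshape" and k :: nat and X Y :: int
  assumes V1_Int_V2: "V1 \<inter> V2 = {c}"
    and no_cross_edges: "\<And>u w. u \<in> V1 - {c} \<Longrightarrow> w \<in> V2 - {c} \<Longrightarrow> \<not> E u w \<and> \<not> E w u"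
    and rep1: "lshape_rep V1 E Q1" and rep2: "lshape_rep V2 E Q2"
    and private1: "private_edges V1 Q1" and private2: "private_edges V2 Q2"
    and k_pos: "0 < k"
    and c_private: "HEdge X Y \<in> lshape_edges (Q1 c)"
      "\<And>w. w \<in> V1 - {c} \<Longrightarrow> HEdge X Y \<notin> lshape_edges (Q1 w)"
    and c_root: "horizontal_root V2 Q2 c"
    and c_row: "\<exists>x. HEdge x (int k * Y) \<in> lshape_edges (Q2 c)"
    and window_HEdge: "\<And>w x y. w \<in> V2 \<Longrightarrow> HEdge x y \<in> lshape_edges (Q2 w) \<Longrightarrow>
      int k * X < x \<and> x + 1 < int k * (X + 1) \<and> \<bar>y - int k * Y\<bar> < int k"
    and window_VEdge: "\<And>w x y. w \<in> V2 \<Longrightarrow> VEdge x y \<in> lshape_edges (Q2 w) \<Longrightarrow>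
      int k * X < x \<and> x < int k * (X + 1)"
begin

definition glued :: "'a \<Rightarrow> lshape" where
  "glued v = (if v \<in> V1 then scale_lshape k (Q1 v) else Q2 v)"

lemma c_mem: "c \<in> V1" "c \<in> V2"
  using V1_Int_V2 by auto

lemma k_pos_int: "0 < int k"
  using k_pos by simp

lemma window_HEdge_column:
  assumes "w \<in> V2" "HEdge x y \<in> lshape_edges (Q2 w)"
  shows "x div int k = X"
proof -
  have "int k * X \<le> x" "x < int k * (X + 1)" using window_HEdge[OF assms] by auto
  then have "X \<le> x div int k" "x div int k < X + 1"
    by (simp_all only: int_le_div_iff[OF k_pos_int] int_div_less_iff[OF k_pos_int])
  then show ?thesis by simp
qed

lemma window_HEdge_row:
  assumes "w \<in> V2" "HEdge x y \<in> lshape_edges (Q2 w)" "int k dvd y"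
  shows "y = int k * Y"
proof -
  obtain m where m: "y = int k * m" using assms(3) by blast
  have "int k * (m - Y) < int k * 1" "int k * (Y - m) < int k * 1"
    using window_HEdge[OF assms(1,2)] unfolding m by (auto simp: algebra_simps)
  then have "m - Y < 1" "Y - m < 1"
    by (simp_all only: mult_less_cancel_left_pos[OF k_pos_int])
  then show ?thesis unfolding m by simp
qed

lemma window_VEdge_column:
  assumes "w \<in> V2" "VEdge x y \<in> lshape_edges (Q2 w)"
  shows "\<not> int k dvd x"
proof
  assume "int k dvd x"
  then obtain m where "x = int k * m" by blast
  then have "X < m" "m < X + 1"
    using window_VEdge[OF assms] k_pos by (simp_all add: mult_less_cancel_left_pos)
  then show False by simp
qed

lemma scaled_meets_window:
  assumes "u \<in> V1" "w \<in> V2" "e \<in> lshape_edges (scale_lshape k (Q1 u))" "e \<in> lshape_edges (Q2 w)"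
  shows "u = c \<and> (\<exists>x. e = HEdge x (int k * Y))"
proof (cases e)
  case (HEdge x y)
  have dvd: "int k dvd y" and unscaled: "HEdge (x div int k) (y div int k) \<in> lshape_edges (Q1 u)"
    using assms(3) unfolding HEdge HEdge_in_scale_lshape[OF k_pos] by auto
  have "y = int k * Y" "x div int k = X"
    using window_HEdge_row[OF assms(2) _ dvd] window_HEdge_column[OF assms(2)] assms(4)
    unfolding HEdge by auto
  then have "HEdge X Y \<in> lshape_edges (Q1 u)" using unscaled k_pos by simp
  then have "u = c" using c_private(2) assms(1) by blast
  then show ?thesis using \<open>y = int k * Y\<close> HEdge by blast
next
  case (VEdge x y)
  have "int k dvd x" using assms(3) unfolding VEdge VEdge_in_scale_lshape[OF k_pos] by simp
  moreover have "\<not> int k dvd x" using window_VEdge_column[OF assms(2)] assms(4) unfolding VEdge .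
  ultimately show ?thesis by contradiction
qed

lemma window_row_in_scaled_c:
  assumes "w \<in> V2" "HEdge x (int k * Y) \<in> lshape_edges (Q2 w)"
  shows "HEdge x (int k * Y) \<in> lshape_edges (scale_lshape k (Q1 c))"
proof -
  have "x div int k = X" by (rule window_HEdge_column[OF assms])
  then show ?thesis unfolding HEdge_in_scale_lshape[OF k_pos] using c_private(1) k_pos by simp
qed

lemma scaled_c_meets_window_iff:
  assumes "w \<in> V2"
  shows "lshape_edges (scale_lshape k (Q1 c)) \<inter> lshape_edges (Q2 w) \<noteq> {} \<longleftrightarrow>
    lshape_edges (Q2 c) \<inter> lshape_edges (Q2 w) \<noteq> {}"
proof
  assume "lshape_edges (scale_lshape k (Q1 c)) \<inter> lshape_edges (Q2 w) \<noteq> {}"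
  then obtain x where x: "HEdge x (int k * Y) \<in> lshape_edges (Q2 w)"
    using scaled_meets_window[OF c_mem(1) assms] by blast
  have "HEdge x (int k * Y) \<in> lshape_edges (Q2 c)"
  proof (cases "w = c")
    case False
    then show ?thesis using c_root c_row x assms unfolding horizontal_root_def by blast
  qed (use x in simp)
  then show "lshape_edges (Q2 c) \<inter> lshape_edges (Q2 w) \<noteq> {}" using x by blast
next
  assume "lshape_edges (Q2 c) \<inter> lshape_edges (Q2 w) \<noteq> {}"
  then obtain e where e: "e \<in> lshape_edges (Q2 c)" "e \<in> lshape_edges (Q2 w)" by blast
  then obtain x y where xy: "e = HEdge x y"
    using c_root unfolding horizontal_root_def by (cases e) auto
  then have "y = int k * Y" using e(1) c_row HEdge_same_row by blast
  then have "e \<in> lshape_edges (scale_lshape k (Q1 c))"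
    using window_row_in_scaled_c[OF assms] e(2) xy by blast
  then show "lshape_edges (scale_lshape k (Q1 c)) \<inter> lshape_edges (Q2 w) \<noteq> {}" using e(2) by blast
qed

lemma glued_rep_across:
  assumes u: "u \<in> V1" and w: "w \<in> V2" "w \<notin> V1"
  shows "E u w \<longleftrightarrow> lshape_edges (glued u) \<inter> lshape_edges (glued w) \<noteq> {}"
    and "E w u \<longleftrightarrow> lshape_edges (glued w) \<inter> lshape_edges (glued u) \<noteq> {}"
proof -
  have glued: "glued u = scale_lshape k (Q1 u)" "glued w = Q2 w"
    using u w unfolding glued_def by auto
  have "(E u w \<longleftrightarrow> lshape_edges (glued u) \<inter> lshape_edges (glued w) \<noteq> {}) \<and>
      (E w u \<longleftrightarrow> lshape_edges (glued u) \<inter> lshape_edges (glued w) \<noteq> {})"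
  proof (cases "u = c")
    case True
    have "w \<noteq> c" using w c_mem by blast
    then have "(E c w \<longleftrightarrow> lshape_edges (Q2 c) \<inter> lshape_edges (Q2 w) \<noteq> {}) \<and>
        (E w c \<longleftrightarrow> lshape_edges (Q2 c) \<inter> lshape_edges (Q2 w) \<noteq> {})"
      using rep2 c_mem(2) w(1) unfolding lshape_rep_def by (metis Int_commute)
    then show ?thesis unfolding True glued[unfolded True] scaled_c_meets_window_iff[OF w(1)] .
  next
    case False
    then have "\<not> E u w" "\<not> E w u" using no_cross_edges u w c_mem by blast+
    moreover have "lshape_edges (glued u) \<inter> lshape_edges (glued w) = {}"
      using scaled_meets_window[OF u w(1)] False unfolding glued by blast
    ultimately show ?thesis by blast
  qed
  then show "E u w \<longleftrightarrow> lshape_edges (glued u) \<inter> lshape_edges (glued w) \<noteq> {}"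
    and "E w u \<longleftrightarrow> lshape_edges (glued w) \<inter> lshape_edges (glued u) \<noteq> {}"
    by (simp_all add: Int_commute)
qed

lemma lshape_rep_glued: "lshape_rep (V1 \<union> V2) E glued"
  unfolding lshape_rep_def
proof (intro ballI impI)
  fix u v assume uv: "u \<in> V1 \<union> V2" "v \<in> V1 \<union> V2" "u \<noteq> v"
  consider "u \<in> V1" "v \<in> V1" | "u \<in> V1" "v \<notin> V1" | "u \<notin> V1" "v \<in> V1" | "u \<notin> V1" "v \<notin> V1"
    by blast
  then show "E u v \<longleftrightarrow> lshape_edges (glued u) \<inter> lshape_edges (glued v) \<noteq> {}"
  proof cases
    case 1
    then show ?thesis
      using rep1 uv(3) unfolding lshape_rep_def glued_def by (simp add: scale_lshape_edges_meet_iff[OF k_pos])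
  next
    case 2
    then show ?thesis using glued_rep_across(1) uv by blast
  next
    case 3
    then show ?thesis using glued_rep_across(2) uv by blast
  next
    case 4
    then show ?thesis using rep2 uv unfolding lshape_rep_def glued_def by simp
  qed
qed

lemma private_edges_glued: "private_edges (V1 \<union> V2) glued"
  unfolding private_edges_def
proof
  fix v assume v: "v \<in> V1 \<union> V2"
  show "\<exists>e\<in>lshape_edges (glued v). \<forall>w\<in>V1 \<union> V2 - {v}. e \<notin> lshape_edges (glued w)"
  proof (cases "v \<in> V1")
    case vV1: True
    have "\<exists>e\<in>lshape_edges (Q1 v). (\<forall>w\<in>V1 - {v}. e \<notin> lshape_edges (Q1 w)) \<and> (v = c \<longrightarrow> e = HEdge X Y)"
      using private1 c_private vV1 unfolding private_edges_def by (cases "v = c") auto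
    then obtain e where e: "e \<in> lshape_edges (Q1 v)" "\<forall>w\<in>V1 - {v}. e \<notin> lshape_edges (Q1 w)"
      "v = c \<Longrightarrow> e = HEdge X Y"
      by blast
    have scaled: "scale_edge k e \<in> lshape_edges (scale_lshape k (Q1 v))"
      using e(1) scale_edge_in_scale_lshape_iff[OF k_pos] by blast
    have not_in: "scale_edge k e \<notin> lshape_edges (glued w)" if w: "w \<in> V1 \<union> V2 - {v}" for w
    proof
      assume in_w: "scale_edge k e \<in> lshape_edges (glued w)"
      show False
      proof (cases "w \<in> V1")
        case True
        then show False
          using in_w e(2) w scale_edge_in_scale_lshape_iff[OF k_pos] unfolding glued_def by auto
      next
        case False
        then have wV2: "w \<in> V2" and in_Q2: "scale_edge k e \<in> lshape_edges (Q2 w)"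
          using w in_w unfolding glued_def by auto
        then have "v = c" using scaled_meets_window[OF vV1 wV2 scaled] by blast
        then have "HEdge (int k * X) (int k * Y) \<in> lshape_edges (Q2 w)" using e(3) in_Q2 by simp
        then show False using window_HEdge[OF wV2] by auto
      qed
    qed
    moreover have "scale_edge k e \<in> lshape_edges (glued v)" using scaled vV1 unfolding glued_def by simp
    ultimately show ?thesis by blast
  next
    case vV1: False
    then have vV2: "v \<in> V2" "v \<noteq> c" using v c_mem by auto
    then obtain e where e: "e \<in> lshape_edges (Q2 v)" "\<forall>w\<in>V2 - {v}. e \<notin> lshape_edges (Q2 w)"
      using private2 unfolding private_edges_def by blast
    have "e \<notin> lshape_edges (scale_lshape k (Q1 w))" if wV1: "w \<in> V1" for w
    proof
      assume "e \<in> lshape_edges (scale_lshape k (Q1 w))"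
      then obtain x where x: "e = HEdge x (int k * Y)"
        using scaled_meets_window[OF wV1 vV2(1) _ e(1)] by blast
      then have "e \<in> lshape_edges (Q2 c)"
        using c_root c_row e(1) vV2 unfolding horizontal_root_def by blast
      then show False using e(2) c_mem(2) vV2(2) by blast
    qed
    then show ?thesis using e vV1 unfolding glued_def by auto
  qed
qed

lemma horizontal_root_glued:
  assumes r: "r \<in> V1" and root: "horizontal_root V1 Q1 r"
  shows "horizontal_root (V1 \<union> V2) glued r"
proof -
  have gr: "glued r = scale_lshape k (Q1 r)" using r unfolding glued_def by simp
  have "VEdge x y \<notin> lshape_edges (glued r)" for x y
    using root unfolding gr VEdge_in_scale_lshape[OF k_pos] horizontal_root_def by blast
  moreover have "HEdge x y \<in> lshape_edges (glued r)"
    if v: "v \<in> V1 \<union> V2 - {r}" and hv: "HEdge x y \<in> lshape_edges (glued v)"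
      and hr: "HEdge x' y \<in> lshape_edges (glued r)" for v x x' y
  proof -
    have dvd: "int k dvd y" and hr': "HEdge (x' div int k) (y div int k) \<in> lshape_edges (Q1 r)"
      using hr unfolding gr HEdge_in_scale_lshape[OF k_pos] by auto
    show ?thesis
    proof (cases "v \<in> V1")
      case True
      then have "HEdge (x div int k) (y div int k) \<in> lshape_edges (Q1 v)"
        using hv unfolding glued_def by (simp add: HEdge_in_scale_lshape[OF k_pos])
      then have "HEdge (x div int k) (y div int k) \<in> lshape_edges (Q1 r)"
        using root hr' v True unfolding horizontal_root_def by blast
      then show ?thesis using dvd unfolding gr HEdge_in_scale_lshape[OF k_pos] by simp
    next
      case False
      then have vV2: "v \<in> V2" and hv': "HEdge x y \<in> lshape_edges (Q2 v)"
        using v hv unfolding glued_def by auto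
      then have y: "y = int k * Y" using window_HEdge_row dvd by blast
      show ?thesis
      proof (cases "r = c")
        case True
        then show ?thesis using window_row_in_scaled_c[OF vV2] hv' y gr by simp
      next
        case False
        have "HEdge (x' div int k) Y \<in> lshape_edges (Q1 r)" using hr' y k_pos by simp
        then have "HEdge X Y \<in> lshape_edges (Q1 r)"
          using root c_private(1) c_mem(1) False unfolding horizontal_root_def by blast
        then show ?thesis using c_private(2) r False by blast
      qed
    qed
  qed
  ultimately show ?thesis unfolding horizontal_root_def by blast
qed

lemma vertical_root_glued:
  assumes r: "r \<in> V1" and root: "vertical_root V1 Q1 r"
  shows "vertical_root (V1 \<union> V2) glued r"
proof -
  have gr: "glued r = scale_lshape k (Q1 r)" using r unfolding glued_def by simp
  have "HEdge x y \<notin> lshape_edges (glued r)" for x y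
    using root unfolding gr HEdge_in_scale_lshape[OF k_pos] vertical_root_def by blast
  moreover have "VEdge x y \<in> lshape_edges (glued r)"
    if v: "v \<in> V1 \<union> V2 - {r}" and hv: "VEdge x y \<in> lshape_edges (glued v)"
      and hr: "VEdge x y' \<in> lshape_edges (glued r)" for v x y y'
  proof -
    have dvd: "int k dvd x" and hr': "VEdge (x div int k) (y' div int k) \<in> lshape_edges (Q1 r)"
      using hr unfolding gr VEdge_in_scale_lshape[OF k_pos] by auto
    have vV1: "v \<in> V1"
    proof (rule ccontr)
      assume "v \<notin> V1"
      then have "v \<in> V2" "VEdge x y \<in> lshape_edges (Q2 v)" using v hv unfolding glued_def by auto
      then show False using window_VEdge_column dvd by blast
    qed
    then have "VEdge (x div int k) (y div int k) \<in> lshape_edges (Q1 v)"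
      using hv unfolding glued_def by (simp add: VEdge_in_scale_lshape[OF k_pos])
    then have "VEdge (x div int k) (y div int k) \<in> lshape_edges (Q1 r)"
      using root hr' v vV1 unfolding vertical_root_def by blast
    then show ?thesis using dvd unfolding gr VEdge_in_scale_lshape[OF k_pos] by simp
  qed
  ultimately show ?thesis unfolding vertical_root_def by blast
qed

end

lemma lshape_edges_shift: "lshape_edges (shift_lshape dx dy s) = shift_edge dx dy ` lshape_edges s"
  using shift_edge_in_shift_lshape_iff in_shift_lshapeE by blast

lemma HEdge_in_shift_lshape:
  "HEdge x y \<in> lshape_edges (shift_lshape dx dy s) \<longleftrightarrow> HEdge (x - dx) (y - dy) \<in> lshape_edges s"
  by (cases s) auto

lemma VEdge_in_shift_lshape:
  "VEdge x y \<in> lshape_edges (shift_lshape dx dy s) \<longleftrightarrow> VEdge (x - dx) (y - dy) \<in> lshape_edges s"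
  by (cases s) auto

lemma lshape_rep_shift: "lshape_rep V E Q \<Longrightarrow> lshape_rep V E (shift_lshape dx dy \<circ> Q)"
  unfolding lshape_rep_def lshape_edges_shift comp_def image_Int[OF inj_shift_edge, symmetric] by simp

lemma private_edges_shift: "private_edges V Q \<Longrightarrow> private_edges V (shift_lshape dx dy \<circ> Q)"
  unfolding private_edges_def comp_def
  by (metis shift_edge_in_shift_lshape_iff)

lemma horizontal_root_shift:
  "horizontal_root V Q r \<Longrightarrow> horizontal_root V (shift_lshape dx dy \<circ> Q) r"
  unfolding horizontal_root_def comp_def HEdge_in_shift_lshape VEdge_in_shift_lshape by blast

lemma window_placement:
  fixes Q :: "'a \<Rightarrow> lshape" and X Y :: int
  assumes fin: "finite V" and c: "c \<in> V" and c_edge: "HEdge x\<^sub>0 y\<^sub>0 \<in> lshape_edges (Q c)"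
  obtains k dx dy where "0 < k"
    "\<And>w x y. w \<in> V \<Longrightarrow> HEdge x y \<in> lshape_edges (shift_lshape dx dy (Q w)) \<Longrightarrow>
       int k * X < x \<and> x + 1 < int k * (X + 1) \<and> \<bar>y - int k * Y\<bar> < int k"
    "\<And>w x y. w \<in> V \<Longrightarrow> VEdge x y \<in> lshape_edges (shift_lshape dx dy (Q w)) \<Longrightarrow>
       int k * X < x \<and> x < int k * (X + 1)"
    "y\<^sub>0 + dy = int k * Y"
proof -
  define B where "B = (\<Sum>w\<in>V. lshape_size (Q w))"
  have size_nonneg: "0 \<le> lshape_size s" for s by (cases s) auto
  have box: "edge_points e \<subseteq> {-B..B} \<times> {-B..B}" if "w \<in> V" "e \<in> lshape_edges (Q w)" for w e
  proof -
    have "lshape_size (Q w) \<le> B"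
      unfolding B_def using fin that(1) size_nonneg by (intro member_le_sum) auto
    then show ?thesis using edge_points_le_lshape_size[OF that(2)] by fastforce
  qed
  have y0: "- B \<le> y\<^sub>0 \<and> y\<^sub>0 \<le> B" using box[OF c c_edge] by auto
  define k where "k = nat (2 * B + 2)"
  have k: "int k = 2 * B + 2" "0 < k" using y0 unfolding k_def by auto
  define dx where "dx = int k * X + B + 1"
  define dy where "dy = int k * Y - y\<^sub>0"
  have HEdge_window: "int k * X < x \<and> x + 1 < int k * (X + 1) \<and> \<bar>y - int k * Y\<bar> < int k"
    if w: "w \<in> V" and "HEdge x y \<in> lshape_edges (shift_lshape dx dy (Q w))" for w x y
  proof -
    have "HEdge (x - dx) (y - dy) \<in> lshape_edges (Q w)"
      using that(2) by (simp add: HEdge_in_shift_lshape)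
    from box[OF w this] y0 show ?thesis
      unfolding dx_def dy_def k(1) by (auto simp: algebra_simps)
  qed
  have VEdge_window: "int k * X < x \<and> x < int k * (X + 1)"
    if w: "w \<in> V" and "VEdge x y \<in> lshape_edges (shift_lshape dx dy (Q w))" for w x y
  proof -
    have "VEdge (x - dx) (y - dy) \<in> lshape_edges (Q w)"
      using that(2) by (simp add: VEdge_in_shift_lshape)
    from box[OF w this] show ?thesis
      unfolding dx_def k(1) by (auto simp: algebra_simps)
  qed
  have "y\<^sub>0 + dy = int k * Y" unfolding dy_def by simp
  from that[OF k(2) HEdge_window VEdge_window this] show thesis .
qed

lemma glue_at_private_HEdge:
  assumes V1_Int_V2: "V1 \<inter> V2 = {c}" and fin: "finite V2"
    and no_cross_edges: "\<And>u w. u \<in> V1 - {c} \<Longrightarrow> w \<in> V2 - {c} \<Longrightarrow> \<not> E u w \<and> \<not> E w u"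
    and rep1: "lshape_rep V1 E Q1" and private1: "private_edges V1 Q1"
    and c_private: "HEdge X Y \<in> lshape_edges (Q1 c)" "\<And>w. w \<in> V1 - {c} \<Longrightarrow> HEdge X Y \<notin> lshape_edges (Q1 w)"
    and rooted2: "rooted_rep V2 E c"
  shows "\<exists>Q. lshape_rep (V1 \<union> V2) E Q \<and> private_edges (V1 \<union> V2) Q \<and>
    (\<forall>r\<in>V1. horizontal_root V1 Q1 r \<longrightarrow> horizontal_root (V1 \<union> V2) Q r) \<and>
    (\<forall>r\<in>V1. vertical_root V1 Q1 r \<longrightarrow> vertical_root (V1 \<union> V2) Q r)"
proof -
  obtain Q2 where rep2: "lshape_rep V2 E Q2" and private2: "private_edges V2 Q2"
    and c_root: "horizontal_root V2 Q2 c"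
    using rooted2 unfolding rooted_rep_def by blast
  have c: "c \<in> V2" using V1_Int_V2 by blast
  obtain e where e: "e \<in> lshape_edges (Q2 c)" using private2 c unfolding private_edges_def by blast
  moreover have "\<forall>x y. VEdge x y \<notin> lshape_edges (Q2 c)" using c_root unfolding horizontal_root_def by blast
  ultimately obtain x\<^sub>0 y\<^sub>0 where c_edge: "HEdge x\<^sub>0 y\<^sub>0 \<in> lshape_edges (Q2 c)"
    by (cases e) auto
  obtain k dx dy where k_pos: "0 < k"
    and window_HEdge: "\<And>w x y. w \<in> V2 \<Longrightarrow> HEdge x y \<in> lshape_edges (shift_lshape dx dy (Q2 w)) \<Longrightarrow>
       int k * X < x \<and> x + 1 < int k * (X + 1) \<and> \<bar>y - int k * Y\<bar> < int k"
    and window_VEdge: "\<And>w x y. w \<in> V2 \<Longrightarrow> VEdge x y \<in> lshape_edges (shift_lshape dx dy (Q2 w)) \<Longrightarrow>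
       int k * X < x \<and> x < int k * (X + 1)"
    and row: "y\<^sub>0 + dy = int k * Y"
    by (rule window_placement[where Q = Q2 and X = X and Y = Y, OF fin c c_edge]) (rule that)
  have c_row: "HEdge (x\<^sub>0 + dx) (int k * Y) \<in> lshape_edges (shift_lshape dx dy (Q2 c))"
    using c_edge by (simp add: HEdge_in_shift_lshape flip: row)
  interpret lshape_gluing V1 V2 c E Q1 "shift_lshape dx dy \<circ> Q2" k X Y
  proof
    show "lshape_rep V2 E (shift_lshape dx dy \<circ> Q2)" using rep2 by (rule lshape_rep_shift)
    show "private_edges V2 (shift_lshape dx dy \<circ> Q2)" using private2 by (rule private_edges_shift)
    show "horizontal_root V2 (shift_lshape dx dy \<circ> Q2) c" using c_root by (rule horizontal_root_shift)
    show "\<exists>x. HEdge x (int k * Y) \<in> lshape_edges ((shift_lshape dx dy \<circ> Q2) c)"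
      using c_row by auto
    show "int k * X < x \<and> x + 1 < int k * (X + 1) \<and> \<bar>y - int k * Y\<bar> < int k"
      if "w \<in> V2" "HEdge x y \<in> lshape_edges ((shift_lshape dx dy \<circ> Q2) w)" for w x y
      using window_HEdge that by simp
    show "int k * X < x \<and> x < int k * (X + 1)"
      if "w \<in> V2" "VEdge x y \<in> lshape_edges ((shift_lshape dx dy \<circ> Q2) w)" for w x y
      using window_VEdge that by simp
  qed (fact V1_Int_V2 no_cross_edges rep1 private1 k_pos c_private)+
  show ?thesis
    using lshape_rep_glued private_edges_glued horizontal_root_glued vertical_root_glued by blast
qed

lemma rooted_rep_glue:
  assumes V1_Int_V2: "V1 \<inter> V2 = {c}" and fin: "finite V2"
    and no_cross_edges: "\<And>u w. u \<in> V1 - {c} \<Longrightarrow> w \<in> V2 - {c} \<Longrightarrow> \<not> E u w \<and> \<not> E w u"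
    and r: "r \<in> V1" and rooted1: "rooted_rep V1 E r" and rooted2: "rooted_rep V2 E c"
  shows "rooted_rep (V1 \<union> V2) E r"
proof -
  obtain Q1 where rep1: "lshape_rep V1 E Q1" and private1: "private_edges V1 Q1"
    and root1: "horizontal_root V1 Q1 r"
    using rooted1 unfolding rooted_rep_def by blast
  have "c \<in> V1" using V1_Int_V2 by blast
  then obtain e where e: "e \<in> lshape_edges (Q1 c)" "\<And>w. w \<in> V1 - {c} \<Longrightarrow> e \<notin> lshape_edges (Q1 w)"
    using private1 unfolding private_edges_def by blast
  show ?thesis
  proof (cases e)
    case (HEdge X Y)
    obtain Q where "lshape_rep (V1 \<union> V2) E Q" "private_edges (V1 \<union> V2) Q"
      "horizontal_root (V1 \<union> V2) Q r"
      using glue_at_private_HEdge[OF V1_Int_V2 fin no_cross_edges rep1 private1 e[unfolded HEdge]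
          rooted2] r root1 by blast
    then show ?thesis unfolding rooted_rep_def by blast
  next
    case (VEdge X Y) \<comment> \<open>glue in the picture reflected in the diagonal, then reflect back\<close>
    have c_private: "HEdge Y X \<in> lshape_edges ((swap_lshape \<circ> Q1) c)"
      "\<And>w. w \<in> V1 - {c} \<Longrightarrow> HEdge Y X \<notin> lshape_edges ((swap_lshape \<circ> Q1) w)"
      using e swap_edge_in_swap_lshape_iff[of "VEdge X Y"] unfolding VEdge comp_def by simp_all
    have swapped: "lshape_rep V1 E (swap_lshape \<circ> Q1)" "private_edges V1 (swap_lshape \<circ> Q1)"
      "vertical_root V1 (swap_lshape \<circ> Q1) r"
      using rep1 private1 root1 by (simp_all add: lshape_rep_swap private_edges_swap vertical_root_swap)
    obtain Q where "lshape_rep (V1 \<union> V2) E Q" "private_edges (V1 \<union> V2) Q"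
      "vertical_root (V1 \<union> V2) Q r"
      using glue_at_private_HEdge[OF V1_Int_V2 fin no_cross_edges swapped(1,2) c_private rooted2]
        r swapped(3) by blast
    then have "lshape_rep (V1 \<union> V2) E (swap_lshape \<circ> Q)" "private_edges (V1 \<union> V2) (swap_lshape \<circ> Q)"
        "horizontal_root (V1 \<union> V2) (swap_lshape \<circ> Q) r"
      by (simp_all add: lshape_rep_swap private_edges_swap horizontal_root_swap)
    then show ?thesis unfolding rooted_rep_def by blast
  qed
qed

section \<open>Representations of cycles\<close>

text \<open>Vertex \<open>0\<close> is a long segment of row \<open>0\<close>.  For \<open>n \<ge> 5\<close> the vertices
  \<open>2, \<dots>, n - 2\<close> form a chain of overlapping segments of row \<open>-1\<close>, joined to row \<open>0\<close> by the
  L-shapes of \<open>1\<close> and \<open>n - 1\<close>; the cycles of length 3 and 4 are too short for this layout.\<close>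

definition cycle_lshape :: "nat \<Rightarrow> nat \<Rightarrow> lshape" where
  "cycle_lshape n i =
    (if i = 0 then RightUp 0 0 (3 * n) 0
     else if n = 3 then RightUp (int i) 0 2 1
     else if n = 4 then (if i = 3 then RightUp 1 0 1 2 else UpRight 2 (int i - 3) 2 1)
     else if i = 1 then UpRight 1 (-2) 2 1
     else if i = 2 then UpRight 1 (-3) 2 4
     else if i + 1 = n then RightUp (3 * int n - 8) 0 1 2
     else if i + 2 = n then RightUp (3 * int n - 11) (-1) 4 2
     else RightUp (3 * int i - 5) (-1) 4 0)"

definition cycle_private_edge :: "nat \<Rightarrow> nat \<Rightarrow> grid_edge" where
  "cycle_private_edge n i =
    (if i = 0 then HEdge 0 0
     else if n = 3 then VEdge (int i + 2) 0
     else if n = 4 then (if i = 1 then VEdge 2 (-2) else if i = 2 then HEdge 2 1 else VEdge 2 1)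
     else if i = 1 then VEdge 1 (-1)
     else if i = 2 then VEdge 1 (-3)
     else if i + 1 = n then VEdge (3 * int n - 7) 1
     else if i + 2 = n then HEdge (3 * int n - 9) (-1)
     else HEdge (3 * int i - 3) (-1))"

lemma cycle_index_cases:
  fixes i n :: nat
  assumes "5 \<le> n" "i < n"
  obtains "i = 0" | "i = 1" | "i = 2" | "3 \<le> i" "i + 3 \<le> n" | "i + 2 = n" | "i + 1 = n"
proof -
  have "i = 0 \<or> i = 1 \<or> i = 2 \<or> (3 \<le> i \<and> i + 3 \<le> n) \<or> i + 2 = n \<or> i + 1 = n"
    using assms by arith
  then show thesis using that by blast
qed

lemma cycle_lshape_ge5:
  assumes "5 \<le> n"
  shows "cycle_lshape n 0 = RightUp 0 0 (3 * n) 0"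
    and "cycle_lshape n (Suc 0) = UpRight 1 (-2) 2 1"
    and "cycle_lshape n 2 = UpRight 1 (-3) 2 4"
    and "3 \<le> i \<Longrightarrow> i + 3 \<le> n \<Longrightarrow> cycle_lshape n i = RightUp (3 * int i - 5) (-1) 4 0"
    and "i + 2 = n \<Longrightarrow> cycle_lshape n i = RightUp (3 * int n - 11) (-1) 4 2"
    and "i + 1 = n \<Longrightarrow> cycle_lshape n i = RightUp (3 * int n - 8) 0 1 2"
  using assms unfolding cycle_lshape_def by auto

lemma cycle_private_edge_ge5:
  assumes "5 \<le> n"
  shows "cycle_private_edge n 0 = HEdge 0 0"
    and "cycle_private_edge n (Suc 0) = VEdge 1 (-1)"
    and "cycle_private_edge n 2 = VEdge 1 (-3)"
    and "3 \<le> i \<Longrightarrow> i + 3 \<le> n \<Longrightarrow> cycle_private_edge n i = HEdge (3 * int i - 3) (-1)"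
    and "i + 2 = n \<Longrightarrow> cycle_private_edge n i = HEdge (3 * int n - 9) (-1)"
    and "i + 1 = n \<Longrightarrow> cycle_private_edge n i = VEdge (3 * int n - 7) 1"
  using assms unfolding cycle_private_edge_def by auto

lemma cycle_lshape_edges_meet_iff:
  assumes "i < n" "j < n" "i \<noteq> j"
  shows "lshape_edges (cycle_lshape n i) \<inter> lshape_edges (cycle_lshape n j) \<noteq> {} \<longleftrightarrow> cyclic_adj n i j"
proof (cases "5 \<le> n")
  case True
  show ?thesis
    unfolding lshape_edges_meet_iff cyclic_adj_iff[OF assms(1,2)]
    using assms True
    by (cases rule: cycle_index_cases[OF True assms(1)]; cases rule: cycle_index_cases[OF True assms(2)];
        simp add: cycle_lshape_ge5[OF True]; arith?)
next
  case False
  then consider "n = 1" | "n = 2" | "n = 3" | "n = 4" using assms(1) by linarith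
  then show ?thesis
    unfolding lshape_edges_meet_iff cyclic_adj_iff[OF assms(1,2)]
    using assms by cases (auto simp: less_Suc_eq numeral_eq_Suc cycle_lshape_def)
qed

lemma cycle_private_edge_mem:
  assumes "i < n" shows "cycle_private_edge n i \<in> lshape_edges (cycle_lshape n i)"
proof (cases "5 \<le> n")
  case True
  show ?thesis
    using assms True
    by (cases rule: cycle_index_cases[OF True assms(1)];
        simp add: cycle_lshape_ge5[OF True] cycle_private_edge_ge5[OF True])
next
  case False
  then consider "n = 1" | "n = 2" | "n = 3" | "n = 4" using assms(1) by linarith
  then show ?thesis
    using assms by cases (auto simp: less_Suc_eq numeral_eq_Suc cycle_lshape_def cycle_private_edge_def)
qed

lemma cycle_private_edge_not_mem:
  assumes "i < n" "j < n" "i \<noteq> j"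
  shows "cycle_private_edge n i \<notin> lshape_edges (cycle_lshape n j)"
proof (cases "5 \<le> n")
  case True
  show ?thesis
    using assms True
    by (cases rule: cycle_index_cases[OF True assms(1)]; cases rule: cycle_index_cases[OF True assms(2)];
        simp add: cycle_lshape_ge5[OF True] cycle_private_edge_ge5[OF True]; arith?)
next
  case False
  then consider "n = 1" | "n = 2" | "n = 3" | "n = 4" using assms(1) by linarith
  then show ?thesis
    using assms by cases (auto simp: less_Suc_eq numeral_eq_Suc cycle_lshape_def cycle_private_edge_def)
qed

lemma cycle_lshape_root_row:
  assumes "0 < i" "i < n" "HEdge x 0 \<in> lshape_edges (cycle_lshape n i)"
  shows "0 \<le> x \<and> x < 3 * int n"
proof (cases "5 \<le> n")
  case True
  then show ?thesis
    using assms by (cases rule: cycle_index_cases[OF True assms(2)]) (simp_all add: cycle_lshape_ge5[OF True])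
next
  case False
  then consider "n = 2" | "n = 3" | "n = 4" using assms(1,2) by linarith
  then show ?thesis
    using assms by cases (auto simp: less_Suc_eq numeral_eq_Suc cycle_lshape_def)
qed

lemma rooted_rep_cycle:
  assumes "0 < n" shows "rooted_rep {..<n} (cyclic_adj n) 0"
proof -
  have "lshape_rep {..<n} (cyclic_adj n) (cycle_lshape n)"
    unfolding lshape_rep_def lessThan_iff
    using cycle_lshape_edges_meet_iff[symmetric] by blast
  moreover have "private_edges {..<n} (cycle_lshape n)"
    unfolding private_edges_def
    using cycle_private_edge_mem cycle_private_edge_not_mem by blast
  moreover have "horizontal_root {..<n} (cycle_lshape n) 0"
  proof -
    have root: "cycle_lshape n 0 = RightUp 0 0 (3 * n) 0" unfolding cycle_lshape_def by simp
    have "HEdge x y \<in> lshape_edges (cycle_lshape n 0)"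
      if i: "i \<in> {..<n} - {0}" and "HEdge x y \<in> lshape_edges (cycle_lshape n i)"
        and "HEdge x' y \<in> lshape_edges (cycle_lshape n 0)" for i x x' y
    proof -
      have "y = 0" using that(3) unfolding root by simp
      then have "0 \<le> x \<and> x < 3 * int n" using cycle_lshape_root_row[of i n x] i that(2) by simp
      then show ?thesis unfolding root \<open>y = 0\<close> by simp
    qed
    moreover have "VEdge x y \<notin> lshape_edges (cycle_lshape n 0)" for x y unfolding root by simp
    ultimately show ?thesis unfolding horizontal_root_def by blast
  qed
  ultimately show ?thesis unfolding rooted_rep_def by blast
qed

section \<open>Induction over cut vertices\<close>

lemma rooted_rep_cactus:
  assumes "cactus V E" "r \<in> V"
  shows "rooted_rep V E r"
  using assms
proof (induction "card V" arbitrary: V E r rule: less_induct)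
  case less
  note cactus = less.prems(1) and r = less.prems(2)
  show ?case
  proof (cases "\<exists>c. cut_vertex V E c")
    case True
    then obtain c where "cut_vertex V E c" by blast
    then obtain V1 V2 where split: "V = V1 \<union> V2" "V1 \<inter> V2 = {c}" "V1 \<subset> V" "V2 \<subset> V"
      "cactus V1 (induced E V1)" "cactus V2 (induced E V2)"
      and no_cross: "\<And>u w. u \<in> V1 - {c} \<Longrightarrow> w \<in> V2 - {c} \<Longrightarrow> \<not> E u w \<and> \<not> E w u"
      by (rule cactus_split_at_cut_vertex[OF cactus]) (rule that)
    have glue: "rooted_rep V E r"
      if "V = A \<union> B" "A \<inter> B = {c}" "A \<subset> V" "B \<subset> V" "cactus A (induced E A)" "cactus B (induced E B)"
        "\<And>u w. u \<in> A - {c} \<Longrightarrow> w \<in> B - {c} \<Longrightarrow> \<not> E u w \<and> \<not> E w u" "r \<in> A" for A B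
    proof -
      have fin: "finite V" by (rule cactus_finite[OF cactus])
      have "rooted_rep A E r"
        using less.hyps[OF psubset_card_mono[OF fin that(3)] that(5,8)] by (simp add: rooted_rep_induced_iff)
      moreover have "c \<in> B" using that(2) by blast
      then have "rooted_rep B E c"
        using less.hyps[OF psubset_card_mono[OF fin that(4)] that(6)] by (simp add: rooted_rep_induced_iff)
      moreover have "finite B" using that(4) fin by (blast intro: finite_subset)
      ultimately show ?thesis
        unfolding that(1) by (intro rooted_rep_glue[OF that(2) _ that(7,8)])
    qed
    show ?thesis
    proof (cases "r \<in> V1")
      case True
      then show ?thesis using glue[OF split no_cross] by blast
    next
      case False
      then have "r \<in> V2" using r split(1) by blast
      moreover have "\<not> E u w \<and> \<not> E w u" if "u \<in> V2 - {c}" "w \<in> V1 - {c}" for u w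
        using no_cross that by blast
      ultimately show ?thesis
        using glue[of V2 V1] split by (metis Int_commute Un_commute)
    qed
  next
    case False
    then obtain C where C: "distinct C" "set C = V" "C ! 0 = r"
      and adj: "\<And>i j. i < length C \<Longrightarrow> j < length C \<Longrightarrow> i \<noteq> j \<Longrightarrow>
        E (C ! i) (C ! j) \<longleftrightarrow> cyclic_adj (length C) i j"
      using cactus_without_cut_vertex_is_cycle[OF cactus _ r] by blast
    have "0 < length C" using C(2) r by auto
    then have "rooted_rep V E (C ! 0)"
      using rooted_rep_bij_betw[OF bij_betw_nth[OF C(1) refl C(2)[symmetric]]] rooted_rep_cycle adj
      by simp
    then show ?thesis using C(3) by simp
  qed
qed

theorem theorem5p9:
  fixes V :: "'a set" and E :: "'a \<Rightarrow> 'a \<Rightarrow> bool"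
  assumes "cactus V E"
  shows "in_B1m V E"
proof -
  obtain r where "r \<in> V" using cactus_nonempty[OF assms] by blast
  then obtain Q where "lshape_rep V E Q" "private_edges V Q"
    using rooted_rep_cactus[OF assms] unfolding rooted_rep_def by blast
  then show ?thesis by (rule in_B1m_if_lshape_rep)
qed

end
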